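(* Let $a>0$, $m\in\mathbb{N}$, and let $T=(T_k)\in\mathcal{T}$ satisfy $$\exp\left(\int_0^x\log\bigl(1-P_1(T_k(\alpha))\bigr)\,d\alpha\right)+\prod_{i=1}^k\bigl(1-P_2(T_i(x))\bigr)=1\qquad\text{for all }0<x\le a,\ 1\le k\le m.$$ Then any pair of $T$-strategies (one for each player) is an equilibrium situation (saddle point) of the game $G_{am}(P,A)$, i.e. for every consumption function $\alpha$ of Player I and every action-moment vector $\eta$ of Player II, the realized payoffs satisfy $K(\alpha;\eta^T)\le v_m(a)\le K(\alpha^T;\eta)$, where $\alpha^T$ (resp. $\eta^T$) is the play realized by Player I's (resp. Player II's) $T$-strategy against $\eta$ (resp. $\alpha$). The value of the game is $$v_m(a)=A_1-(A_1+A_2)\exp\left(\int_0^a\log\bigl(1-P_1(T_m(\alpha))\bigr)\,d\alpha\right)=(A_1+A_2)\prod_{i=1}^m\bigl(1-P_2(T_i(a))\bigr)-A_2 .$$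
   Context: The game $G_{am}(P,A)$ (noisy fighter-bomber duel). Two players act during $[0,1]$. Player I has an infinitely divisible resource $a>0$; Player II has $m\in\mathbb{Z}_{\ge0}$ indivisible units. Effectiveness functions $P_1,P_2:[0,1]\to[0,1]$ are continuously differentiable, increasing, $P_j(0)=0$, $P_j(1)=1$, $P_j(t)<1$ for $t<1$; $p=1-P_1$, $q=1-P_2$. Profits $A_1,A_2>0$. Player I's consumption function $\alpha(t)$ (remaining resource) is nonincreasing, continuous, piecewise $C^1$ on $(0,1)$, $\alpha(0)=a$; intensity $\xi=-\alpha'$. Player II's consumption function $n(t)$ is a nonincreasing left-continuous step function with $n(0)=m$; its jump points $0\le\eta_m\le\dots\le\eta_1\le1$ are his action moments, $\eta=(\eta_1,\dots,\eta_m)$. If Player II does not act in $[t_1,t_2]$, Player I succeeds there with probability $\varphi(\alpha,t_1,t_2)=1-\exp\bigl(-\int_{t_1}^{t_2}\log(1-P_1(\tau))\,d\alpha(\tau)\bigr)$; a unit used by Player II at time $t$ succeeds with probability $P_2(t)$. The game stops at the first success; the successful player $j$ gets $A_j$ from the other; payoff $0$ if nobody or both succeed simultaneously. A player not having exhausted his resource consumes it by time $1$ so as to succeed with probability $1$. Expected payoff to Player I: for $m=0$, $K=A_1$ if $a>0$, $K=0$ if $a=0$; for $m\ge1$, $K(\alpha;\eta_1,\dots,\eta_m)=A_1\varphi(\alpha,0,\eta_m)-A_2(1-\varphi(\alpha,0,\eta_m))P_2(\eta_m)+(1-P_2(\eta_m))(1-\varphi(\alpha,0,\eta_m))K(\alpha_m;\eta_1,\dots,\eta_{m-1})$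 with $\alpha_m=\alpha(\eta_m)$ on $[0,\eta_m)$ and $\alpha_m=\alpha$ on $[\eta_m,1]$. The duel is noisy: at each moment each player knows both players' current remaining resources $\alpha,n$. A strategy of Player I is a rule $\xi=u(t,\alpha,n)$ giving his consumption intensity; a strategy of Player II is a rule $\eta_n=v(\alpha,n)$ giving his next action moment. The class $\mathcal{T}$: sequences $T=(T_1,T_2,\dots)$ of functions on $[0,\infty)$, each continuous on $[0,\infty)$ and $C^1$ on $(0,\infty)$, with $0<T_k\le1$, $T_k'(x)<0$ and $T_{k+1}(x)<T_k(x)$ for $x>0$, and $T_k(0)=1$. $T$-strategies: with $\alpha,n$ the current remaining resources at time $t$, Player I uses intensity $\xi^T(t)=0$ if $t<T_n(\alpha)$ and $\xi^T(t)=-1/T_n'(\alpha)$ if $t=T_n(\alpha)$; Player II's next action moment is $\eta^T=T_n(\alpha)$. *)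

theory Defs
  imports "HOL-Analysis.Analysis"
begin

definition effectiveness :: "(real \<Rightarrow> real) \<Rightarrow> bool" where
  "effectiveness P \<longleftrightarrow>
     (\<exists>D. continuous_on {0..1} D \<and>
          (\<forall>t\<in>{0..1}. (P has_real_derivative D t) (at t within {0..1}))) \<and>
     strict_mono_on {0..1} P \<and> P 0 = 0 \<and> P 1 = 1 \<and>
     (\<forall>t\<in>{0..1}. 0 \<le> P t \<and> P t \<le> 1) \<and> (\<forall>t\<in>{0..<1}. P t < 1)"

text \<open>The class \<open>\<T>\<close>: the sequence \<open>T 1, T 2, \<dots>\<close> (the value \<open>T 0\<close> is irrelevant).\<close>
definition classT :: "(nat \<Rightarrow> real \<Rightarrow> real) \<Rightarrow> bool" where
  "classT T \<longleftrightarrow> (\<forall>k\<ge>1.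
     continuous_on {0..} (T k) \<and>
     (\<exists>D. continuous_on {0<..} D \<and>
          (\<forall>x>0. (T k has_real_derivative D x) (at x) \<and> D x < 0)) \<and>
     (\<forall>x\<ge>0. 0 < T k x \<and> T k x \<le> 1) \<and>
     (\<forall>x>0. T (Suc k) x < T k x) \<and>
     T k 0 = 1)"

text \<open>Consumption function of Player I (remaining resource) with initial resource a.\<close>
definition consumption_fun :: "real \<Rightarrow> (real \<Rightarrow> real) \<Rightarrow> bool" where
  "consumption_fun a \<alpha> \<longleftrightarrow>
     \<alpha> 0 = a \<and>
     (\<forall>s t. 0 \<le> s \<and> s \<le> t \<and> t \<le> 1 \<longrightarrow> \<alpha> t \<le> \<alpha> s) \<and>
     (\<forall>t\<in>{0..1}. 0 \<le> \<alpha> t) \<and>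
     continuous_on {0..1} \<alpha> \<and>
     \<alpha> piecewise_C1_differentiable_on {0<..<1}"

definition action_moments :: "nat \<Rightarrow> (nat \<Rightarrow> real) \<Rightarrow> bool" where
  "action_moments m \<eta> \<longleftrightarrow>
     (0 < m \<longrightarrow> 0 \<le> \<eta> m \<and> \<eta> 1 \<le> 1) \<and>
     (\<forall>i. 1 \<le> i \<and> i < m \<longrightarrow> \<eta> (Suc i) \<le> \<eta> i)"

definition clamp01 :: "real \<Rightarrow> real" where
  "clamp01 t = max 0 (min 1 t)"

text \<open>The Lebesgue--Stieltjes quantity
  \<open>J = - \<integral>_{t1}^{t2} log(1 - P1 \<tau>) d\<alpha>(\<tau>) = \<integral>_{t1}^{t2} (- log(1 - P1 \<tau>)) d(-\<alpha>)(\<tau>) \<in> [0,\<infinity>]\<close>,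
  and \<open>\<phi>(\<alpha>,t1,t2) = 1 - exp(-J)\<close> (with exp(-\<infinity>) = 0).\<close>
definition phiI :: "(real \<Rightarrow> real) \<Rightarrow> (real \<Rightarrow> real) \<Rightarrow> real \<Rightarrow> real \<Rightarrow> real" where
  "phiI P1 \<alpha> t1 t2 =
     (let J = (\<integral>\<^sup>+ \<tau>\<in>{t1..t2}. ennreal (- ln (1 - P1 \<tau>))
                 \<partial>(interval_measure (\<lambda>t. - \<alpha> (clamp01 t))))
      in 1 - (if J = \<infinity> then 0 else exp (- enn2real J)))"

definition shift_cons :: "(real \<Rightarrow> real) \<Rightarrow> real \<Rightarrow> real \<Rightarrow> real" where
  "shift_cons \<alpha> e = (\<lambda>t. if t < e then \<alpha> e else \<alpha> t)"

primrec Kpay :: "(real \<Rightarrow> real) \<Rightarrow> (real \<Rightarrow> real) \<Rightarrow> real \<Rightarrow> real \<Rightarrow>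
                 (real \<Rightarrow> real) \<Rightarrow> (nat \<Rightarrow> real) \<Rightarrow> nat \<Rightarrow> real" where
  "Kpay P1 P2 A1 A2 \<alpha> \<eta> 0 = (if 0 < \<alpha> 0 then A1 else 0)"
| "Kpay P1 P2 A1 A2 \<alpha> \<eta> (Suc m) =
     (let e = \<eta> (Suc m); \<phi> = phiI P1 \<alpha> 0 e in
       A1 * \<phi> - A2 * (1 - \<phi>) * P2 e
       + (1 - P2 e) * (1 - \<phi>) * Kpay P1 P2 A1 A2 (shift_cons \<alpha> e) \<eta> m)"

text \<open>Player II's T-strategy against a consumption function \<open>\<alpha>\<close>: having n units
  from time s on, he acts at the first moment t \<ge> s at which t \<ge> T_n(\<alpha>(t)).\<close>
definition actT :: "(nat \<Rightarrow> real \<Rightarrow> real) \<Rightarrow> (real \<Rightarrow> real) \<Rightarrow> nat \<Rightarrow> real \<Rightarrow> real" where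
  "actT T \<alpha> n s = Inf {t \<in> {s..1}. T n (\<alpha> t) \<le> t}"

primrec etaT_aux :: "(nat \<Rightarrow> real \<Rightarrow> real) \<Rightarrow> (real \<Rightarrow> real) \<Rightarrow> nat \<Rightarrow> nat \<Rightarrow> real" where
  "etaT_aux T \<alpha> m 0 = 0"
| "etaT_aux T \<alpha> m (Suc j) = actT T \<alpha> (m - j) (etaT_aux T \<alpha> m j)"

text \<open>Realized action moments \<open>\<eta>^T = (\<eta>_1,\<dots>,\<eta>_m)\<close>; \<open>etaT T \<alpha> m n = \<eta>_n\<close>.\<close>
definition etaT :: "(nat \<Rightarrow> real \<Rightarrow> real) \<Rightarrow> (real \<Rightarrow> real) \<Rightarrow> nat \<Rightarrow> nat \<Rightarrow> real" where
  "etaT T \<alpha> m n = etaT_aux T \<alpha> m (Suc m - n)"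

text \<open>Player I's T-strategy with n units of Player II remaining, starting resource c:
  hold while t < T_n(\<alpha>), then move along t = T_n(\<alpha>).\<close>
definition holdT :: "(nat \<Rightarrow> real \<Rightarrow> real) \<Rightarrow> nat \<Rightarrow> real \<Rightarrow> real \<Rightarrow> real" where
  "holdT T n c t = Sup {x \<in> {0..c}. t \<le> T n x}"

text \<open>Resources at the moments of Player II's actions: \<open>cT j\<close> = resource after j actions.\<close>
primrec cT :: "(nat \<Rightarrow> real \<Rightarrow> real) \<Rightarrow> (nat \<Rightarrow> real) \<Rightarrow> nat \<Rightarrow> real \<Rightarrow> nat \<Rightarrow> real" where
  "cT T \<eta> m a 0 = a"
| "cT T \<eta> m a (Suc j) = holdT T (m - j) (cT T \<eta> m a j) (\<eta> (m - j))"

text \<open>Realized consumption function \<open>\<alpha>^T\<close> of Player I against \<open>\<eta>\<close>; n(t) is Player II's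
  (left-continuous) number of remaining units.  After Player II's last action Player I's
  behaviour is irrelevant for the payoff; he then keeps his resource.\<close>
definition alphaT :: "(nat \<Rightarrow> real \<Rightarrow> real) \<Rightarrow> (nat \<Rightarrow> real) \<Rightarrow> nat \<Rightarrow> real \<Rightarrow> real \<Rightarrow> real" where
  "alphaT T \<eta> m a t =
     (let n = card {i \<in> {1..m}. t \<le> \<eta> i} in
      if n = 0 then cT T \<eta> m a m else holdT T n (cT T \<eta> m a (m - n)) t)"

end

theory Submission
  imports Defs
begin

(* Write E k x = exp(\<integral>_0^x log(1 - P1(T_k))) for Player I's failure probability when he
   spends x along the curve t = T_k(resource), and V k c = A1 - (A1 + A2) E k c (V 0 c = A1 for
   c > 0) for the candidate value of the subgame with resource c against k units.  The balance
   condition yields a Bellman identity: a unit of Player II acting on the curve T_{k+1} leaves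
   Player I exactly V_{k+1}, acting earlier leaves him more.  By a change of variables, Player I's
   failure factor 1 - \<phi> (exp of a Stieltjes integral along his path) is compared with E: staying
   on or above the curve he succeeds at most as often as along it, moving along it exactly as often.
   Two inductions over the number k of remaining units, with the path frozen up to the last
   action, then give K \<le> V m a against Player II's T-strategy and K \<ge> V m a against Player I's. *)

section \<open>Stieltjes measures of continuous nonincreasing paths\<close>

text \<open>The success probability \<open>phiI\<close> integrates over the Stieltjes measure of the
  resource path, extended to the whole line by clamping the time to [0,1].\<close>

lemma clamp01_continuous: "continuous_on UNIV clamp01"
  unfolding clamp01_def by (intro continuous_intros)

lemma clamp01_in_unit: "clamp01 t \<in> {0..1}"
  unfolding clamp01_def by auto

lemma clamp01_id: "t \<in> {0..1} \<Longrightarrow> clamp01 t = t"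
  unfolding clamp01_def by auto

lemma clamp01_mono: "x \<le> y \<Longrightarrow> clamp01 x \<le> clamp01 y"
  unfolding clamp01_def by auto

lemma superlevel_set_interval:
  fixes b :: "real \<Rightarrow> real"
  assumes bc: "continuous_on {s0..e} b" and bm: "\<And>x y. x \<le> y \<Longrightarrow> b y \<le> b x"
    and s0: "s0 \<le> e" and x: "b e \<le> x" "x < b s0"
  obtains t1 where "t1 \<in> {s0..e}" "b t1 = x" "{s0..e} \<inter> {\<tau>. x < b \<tau>} = {s0..<t1}"
proof -
  let ?Z = "{\<tau>\<in>{s0..e}. b \<tau> = x}"
  obtain z where "s0 \<le> z" "z \<le> e" "b z = x"
    using IVT2'[of b e x s0, OF x(1) _ s0 bc] x by auto
  then have Zne: "?Z \<noteq> {}" by auto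
  have Zcl: "closed ?Z"
    using continuous_closed_preimage[OF bc closed_atLeastAtMost closed_singleton[of x]]
    by (simp add: vimage_def Int_def)
  have Zbd: "bdd_below ?Z" by (auto intro: bdd_belowI[of _ s0])
  define t1 where "t1 = Inf ?Z"
  have t1Z: "t1 \<in> ?Z" unfolding t1_def using closed_contains_Inf[OF Zne Zbd Zcl] .
  have t1_least: "\<And>\<tau>. \<tau> \<in> ?Z \<Longrightarrow> t1 \<le> \<tau>" unfolding t1_def using Zbd by (simp add: cInf_lower)
  have "{s0..e} \<inter> {\<tau>. x < b \<tau>} = {s0..<t1}"
  proof (intro set_eqI iffI)
    fix \<tau> assume \<tau>: "\<tau> \<in> {s0..e} \<inter> {\<tau>. x < b \<tau>}"
    have "\<tau> < t1"
    proof (rule ccontr)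
      assume "\<not> \<tau> < t1"
      then have "b \<tau> \<le> b t1" using bm by simp
      then show False using \<tau> t1Z by auto
    qed
    then show "\<tau> \<in> {s0..<t1}" using \<tau> by auto
  next
    fix \<tau> assume \<tau>: "\<tau> \<in> {s0..<t1}"
    have "b \<tau> \<noteq> x" using t1_least[of \<tau>] \<tau> t1Z by fastforce
    moreover have "b t1 \<le> b \<tau>" using \<tau> bm by simp
    ultimately show "\<tau> \<in> {s0..e} \<inter> {\<tau>. x < b \<tau>}" using \<tau> t1Z by auto
  qed
  with t1Z show ?thesis using that by blast
qed

text \<open>The Stieltjes measure of \<open>-b\<close> gives the superlevel sets of \<open>b\<close> inside [s0,e]
  exactly the Lebesgue measure of the corresponding levels: this is the distribution
  function of the image of the Stieltjes measure under \<open>b\<close>.\<close>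
lemma interval_measure_superlevel:
  fixes b :: "real \<Rightarrow> real"
  assumes bc: "continuous_on UNIV b" and bm: "\<And>x y. x \<le> y \<Longrightarrow> b y \<le> b x"
    and s0: "s0 \<le> e"
  shows "emeasure (interval_measure (\<lambda>t. - b t)) ({s0..e} \<inter> {\<tau>. x < b \<tau>})
       = emeasure lborel ({b e..b s0} \<inter> {x<..})"
proof -
  let ?\<mu> = "interval_measure (\<lambda>t. - b t)"
  have Icc: "\<And>u v. u \<le> v \<Longrightarrow> emeasure ?\<mu> {u..v} = ennreal (b u - b v)"
    by (subst emeasure_interval_measure_Icc) (use bm bc in \<open>auto intro: continuous_intros\<close>)
  consider "x < b e" | "b s0 \<le> x" | "b e \<le> x" "x < b s0" by linarith
  then show ?thesis
  proof cases
    case 1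
    then have "{s0..e} \<inter> {\<tau>. x < b \<tau>} = {s0..e}" "{b e..b s0} \<inter> {x<..} = {b e..b s0}"
      using bm by (auto intro: less_le_trans)
    then show ?thesis using Icc[OF s0] bm[OF s0] by simp
  next
    case 2
    then have "{s0..e} \<inter> {\<tau>. x < b \<tau>} = {}" "{b e..b s0} \<inter> {x<..} = {}"
      using bm by force+
    then show ?thesis by simp
  next
    case 3
    have bce: "continuous_on {s0..e} b" using bc continuous_on_subset by blast
    obtain t1 where t1: "t1 \<in> {s0..e}" "b t1 = x" "{s0..e} \<inter> {\<tau>. x < b \<tau>} = {s0..<t1}"
      using superlevel_set_interval[OF bce bm s0 3] by blast
    have "emeasure ?\<mu> {t1} = 0" using Icc[of t1 t1] by simp
    then have "emeasure ?\<mu> ({s0..t1} - {t1}) = emeasure ?\<mu> {s0..t1} - emeasure ?\<mu> {t1}"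
      by (intro emeasure_Diff) (use t1 in auto)
    moreover have "{s0..<t1} = {s0..t1} - {t1}" by auto
    ultimately have "emeasure ?\<mu> {s0..<t1} = ennreal (b s0 - x)"
      using Icc[of s0 t1] t1 \<open>emeasure ?\<mu> {t1} = 0\<close> by simp
    moreover have "{b e..b s0} \<inter> {x<..} = {x<..b s0}" using 3 by auto
    ultimately show ?thesis using t1(3) 3 by simp
  qed
qed

lemma distr_interval_measure_restricted:
  fixes b :: "real \<Rightarrow> real"
  assumes bc: "continuous_on UNIV b" and bm: "\<And>x y. x \<le> y \<Longrightarrow> b y \<le> b x"
    and s0: "s0 \<le> e"
  shows "distr (density (interval_measure (\<lambda>t. - b t)) (indicator {s0..e})) borel b
       = density lborel (indicator {b e..b s0})"
proof (rule measure_eqI_lessThan)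
  let ?\<mu> = "interval_measure (\<lambda>t. - b t)"
  let ?D = "density ?\<mu> (indicator {s0..e})"
  have bmeas: "b \<in> borel_measurable borel" using bc by (rule borel_measurable_continuous_onI)
  then have bmeas': "b \<in> measurable ?D borel" by (simp add: measurable_def)
  have eq: "emeasure (distr ?D borel b) {x<..} = emeasure ?\<mu> ({s0..e} \<inter> {\<tau>. x < b \<tau>})" for x
  proof -
    have "b -` {x<..} \<in> sets borel" using measurable_sets[OF bmeas, of "{x<..}"] by simp
    then have "{\<tau>. x < b \<tau>} \<in> sets ?\<mu>" by (simp add: vimage_def)
    then show ?thesis
      by (subst emeasure_distr[OF bmeas']) (auto simp: emeasure_restricted vimage_def)
  qed
  show "sets (distr ?D borel b) = sets borel" "sets (density lborel (indicator {b e..b s0})) = sets borel"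
    by simp_all
  fix x
  have "emeasure ?\<mu> ({s0..e} \<inter> {\<tau>. x < b \<tau>}) \<le> emeasure ?\<mu> {s0..e}"
    by (rule emeasure_mono) auto
  also have "\<dots> = ennreal (b s0 - b e)"
    by (subst emeasure_interval_measure_Icc[OF s0]) (use bm bc in \<open>auto intro: continuous_intros\<close>)
  finally show "emeasure (distr ?D borel b) {x<..} < \<infinity>"
    using eq by (simp add: le_less_trans)
  show "emeasure (distr ?D borel b) {x<..} = emeasure (density lborel (indicator {b e..b s0})) {x<..}"
    using eq interval_measure_superlevel[OF bc bm s0, of x] by (simp add: emeasure_restricted)
qed

lemma clamped_path:
  fixes \<beta> :: "real \<Rightarrow> real"
  assumes cont: "continuous_on {0..1} \<beta>"
    and anti: "\<forall>s t. 0 \<le> s \<and> s \<le> t \<and> t \<le> 1 \<longrightarrow> \<beta> t \<le> \<beta> s"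
  shows "continuous_on UNIV (\<lambda>t. \<beta> (clamp01 t))" "\<And>x y. x \<le> y \<Longrightarrow> \<beta> (clamp01 y) \<le> \<beta> (clamp01 x)"
proof -
  show "continuous_on UNIV (\<lambda>t. \<beta> (clamp01 t))"
    by (rule continuous_on_compose2[OF cont clamp01_continuous]) (auto simp: clamp01_def)
  fix x y :: real assume "x \<le> y"
  then show "\<beta> (clamp01 y) \<le> \<beta> (clamp01 x)"
    using anti clamp01_in_unit[of x] clamp01_in_unit[of y] clamp01_mono[of x y] by auto
qed

lemma emeasure_path_interval:
  fixes \<beta> :: "real \<Rightarrow> real"
  assumes cont: "continuous_on {0..1} \<beta>"
    and anti: "\<forall>s t. 0 \<le> s \<and> s \<le> t \<and> t \<le> 1 \<longrightarrow> \<beta> t \<le> \<beta> s"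
    and uv: "0 \<le> u" "u \<le> v" "v \<le> 1"
  shows "emeasure (interval_measure (\<lambda>t. - \<beta> (clamp01 t))) {u..v} = ennreal (\<beta> u - \<beta> v)"
  using clamped_path[OF cont anti] uv
  by (subst emeasure_interval_measure_Icc) (auto intro: continuous_intros simp: clamp01_id)

lemma nn_integral_path_substitution:
  fixes \<beta> :: "real \<Rightarrow> real" and H :: "real \<Rightarrow> ennreal"
  assumes cont: "continuous_on {0..1} \<beta>"
    and anti: "\<forall>s t. 0 \<le> s \<and> s \<le> t \<and> t \<le> 1 \<longrightarrow> \<beta> t \<le> \<beta> s"
    and s0: "0 \<le> s0" "s0 \<le> e" "e \<le> 1"
    and H: "H \<in> borel_measurable borel"
  shows "(\<integral>\<^sup>+\<tau>. H (\<beta> \<tau>) * indicator {s0..e} \<tau> \<partial>interval_measure (\<lambda>t. - \<beta> (clamp01 t)))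
       = (\<integral>\<^sup>+y. H y * indicator {\<beta> e..\<beta> s0} y \<partial>lborel)"
proof -
  define b where "b = (\<lambda>t. \<beta> (clamp01 t))"
  note bc = clamped_path(1)[OF cont anti, folded b_def]
  have bm: "\<And>x y. x \<le> y \<Longrightarrow> b y \<le> b x" unfolding b_def by (rule clamped_path(2)[OF cont anti])
  have bmeas: "b \<in> borel_measurable borel" using bc by (rule borel_measurable_continuous_onI)
  let ?\<mu> = "interval_measure (\<lambda>t. - b t)"
  let ?D = "density ?\<mu> (indicator {s0..e})"
  have "(\<integral>\<^sup>+\<tau>. H (\<beta> \<tau>) * indicator {s0..e} \<tau> \<partial>?\<mu>) = (\<integral>\<^sup>+\<tau>. indicator {s0..e} \<tau> * H (b \<tau>) \<partial>?\<mu>)"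
    by (rule nn_integral_cong) (use s0 in \<open>auto simp: b_def clamp01_id split: split_indicator\<close>)
  also have "\<dots> = (\<integral>\<^sup>+\<tau>. H (b \<tau>) \<partial>?D)"
    by (rule nn_integral_density[symmetric]) (use H bmeas in auto)
  also have "\<dots> = (\<integral>\<^sup>+y. H y \<partial>distr ?D borel b)"
    by (rule nn_integral_distr[symmetric]) (use H bmeas in \<open>auto simp: measurable_def\<close>)
  also have "\<dots> = (\<integral>\<^sup>+y. indicator {b e..b s0} y * H y \<partial>lborel)"
    using H by (simp add: distr_interval_measure_restricted[OF bc bm s0(2)] nn_integral_density)
  finally show ?thesis using s0 unfolding b_def by (simp add: clamp01_id mult.commute)
qed


section \<open>The class \<open>\<T>\<close> and effectiveness functions\<close>

lemma classT_continuous: "classT T \<Longrightarrow> 1 \<le> k \<Longrightarrow> continuous_on {0..} (T k)"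
  unfolding classT_def by blast

lemma classT_at_0: "classT T \<Longrightarrow> 1 \<le> k \<Longrightarrow> T k 0 = 1"
  unfolding classT_def by blast

lemma classT_range: "classT T \<Longrightarrow> 1 \<le> k \<Longrightarrow> 0 \<le> x \<Longrightarrow> 0 < T k x \<and> T k x \<le> 1"
  unfolding classT_def by blast

text \<open>Each \<open>T k\<close> is strictly decreasing, by the mean value theorem (\<open>T k' < 0\<close>).\<close>
lemma classT_strict_anti:
  assumes T: "classT T" and k: "1 \<le> k" and xy: "0 \<le> x" "x < y"
  shows "T k y < T k x"
proof -
  obtain D where D: "\<forall>x>0. (T k has_real_derivative D x) (at x) \<and> D x < 0"
    using T k unfolding classT_def by blast
  have c: "continuous_on {x..y} (T k)"
    using classT_continuous[OF T k] by (rule continuous_on_subset) (use xy in auto)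
  have "T k differentiable (at z)" if "x < z" for z
  proof -
    have "0 < z" using that xy by linarith
    then show ?thesis using D by (auto simp: real_differentiable_def)
  qed
  then obtain l z where lz: "x < z" "z < y" "DERIV (T k) z :> l" "T k y - T k x = (y - x) * l"
    using MVT[OF xy(2) c] by blast
  have z: "0 < z" using lz(1) xy by linarith
  then have "l = D z" using D lz(3) DERIV_unique by blast
  then have "l < 0" using D z by blast
  then have "(y - x) * l < 0" using xy by (intro mult_pos_neg) auto
  then show ?thesis using lz by linarith
qed

lemma classT_anti: "classT T \<Longrightarrow> 1 \<le> k \<Longrightarrow> 0 \<le> x \<Longrightarrow> x \<le> y \<Longrightarrow> T k y \<le> T k x"
  using classT_strict_anti[of T k x y] by (cases "x = y") auto

lemma classT_inj:
  assumes "classT T" "1 \<le> k" "0 \<le> x" "0 \<le> y" "T k x = T k y" shows "x = y"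
proof (rule ccontr)
  assume "x \<noteq> y"
  then consider "x < y" | "y < x" by linarith
  then show False
    using classT_strict_anti[OF assms(1,2,3), of y] classT_strict_anti[OF assms(1,2,4), of x] assms(5)
    by cases auto
qed

lemma classT_Suc_less: "classT T \<Longrightarrow> 1 \<le> k \<Longrightarrow> 0 < x \<Longrightarrow> T (Suc k) x < T k x"
  unfolding classT_def by blast

lemma classT_less_1: "classT T \<Longrightarrow> 1 \<le> k \<Longrightarrow> 0 < x \<Longrightarrow> T k x < 1"
  using classT_strict_anti[of T k 0 x] classT_at_0[of T k] by auto

text \<open>The curves are ordered: fewer remaining units of Player II mean later moments.\<close>
lemma classT_index_anti:
  assumes T: "classT T" and ij: "1 \<le> i" "i \<le> j" and x: "0 \<le> x"
  shows "T j x \<le> T i x"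
  using ij(2)
proof (induction j rule: dec_induct)
  case (step n)
  have "T (Suc n) x \<le> T n x"
    using classT_at_0[OF T, of n] classT_at_0[OF T, of "Suc n"] classT_Suc_less[OF T, of n x] x ij(1) step(1)
    by (cases "x = 0") auto
  then show ?case using step by simp
qed simp

lemma effectiveness_continuous: "effectiveness P \<Longrightarrow> continuous_on {0..1} P"
  unfolding effectiveness_def continuous_on_eq_continuous_within
  using DERIV_continuous by blast

lemma effectiveness_mono:
  assumes "effectiveness P" "0 \<le> x" "x \<le> y" "y \<le> 1" shows "P x \<le> P y"
proof (cases "x = y")
  case False
  have "strict_mono_on {0..1} P" using assms(1) unfolding effectiveness_def by blast
  then show ?thesis using assms False unfolding strict_mono_on_def by (simp add: less_imp_le)
qed simp

lemma effectiveness_range: "effectiveness P \<Longrightarrow> 0 \<le> x \<Longrightarrow> x \<le> 1 \<Longrightarrow> 0 \<le> P x \<and> P x \<le> 1"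
  unfolding effectiveness_def by auto

lemma effectiveness_less_1: "effectiveness P \<Longrightarrow> 0 \<le> x \<Longrightarrow> x < 1 \<Longrightarrow> P x < 1"
  unfolding effectiveness_def by auto

lemma effectiveness_at_1: "effectiveness P \<Longrightarrow> P 1 = 1"
  unfolding effectiveness_def by auto

section \<open>Player I's holding rule \<open>holdT\<close>\<close>

context
  fixes T :: "nat \<Rightarrow> real \<Rightarrow> real" and k :: nat and c :: real
  assumes T: "classT T" and k: "1 \<le> k" and c: "0 \<le> c"
begin

lemma holdT_zero_mem: "t \<le> 1 \<Longrightarrow> 0 \<in> {x \<in> {0..c}. t \<le> T k x}"
  using classT_at_0[OF T k] c by auto

lemma holdT_bounds: assumes "t \<le> 1" shows "0 \<le> holdT T k c t \<and> holdT T k c t \<le> c"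
  using holdT_zero_mem[OF assms] unfolding holdT_def
  by (intro conjI cSup_upper cSup_least) (auto intro: bdd_aboveI[of _ c])

lemma holdT_before_curve: "t \<le> T k c \<Longrightarrow> holdT T k c t = c"
  unfolding holdT_def using c by (intro cSup_eq_maximum) auto

lemma holdT_on_curve: assumes "T k c \<le> t" "t \<le> 1" shows "T k (holdT T k c t) = t"
proof -
  have cc: "continuous_on {0..c} (T k)"
    using classT_continuous[OF T k] by (rule continuous_on_subset) auto
  obtain x where x: "0 \<le> x" "x \<le> c" "T k x = t"
    using IVT2'[of "T k" c t 0, OF assms(1) _ c cc] classT_at_0[OF T k] assms by auto
  have "holdT T k c t = x" unfolding holdT_def
  proof (rule cSup_eq_maximum)
    fix y assume "y \<in> {x \<in> {0..c}. t \<le> T k x}"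
    then show "y \<le> x" using classT_strict_anti[OF T k, of x y] x by (cases "x < y") auto
  qed (use x in auto)
  then show ?thesis using x by simp
qed

lemma holdT_below_curve: "t \<le> 1 \<Longrightarrow> t \<le> T k (holdT T k c t)"
  using holdT_before_curve holdT_on_curve by (cases "t \<le> T k c") auto

lemma holdT_anti: assumes "t1 \<le> t2" "t2 \<le> 1" shows "holdT T k c t2 \<le> holdT T k c t1"
  unfolding holdT_def using holdT_zero_mem[OF assms(2)] assms
  by (intro cSup_subset_mono) (auto intro: bdd_aboveI[of _ c])

text \<open>On the curve part, \<open>holdT\<close> inverts the continuous injective map \<open>T k\<close> on [0,c].\<close>
lemma holdT_continuous: "continuous_on {0..1} (holdT T k c)"
proof -
  have cc: "continuous_on {0..c} (T k)"
    using classT_continuous[OF T k] by (rule continuous_on_subset) auto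
  have img: "T k ` {0..c} = {T k c..1}"
  proof
    show "T k ` {0..c} \<subseteq> {T k c..1}"
      using classT_anti[OF T k] classT_range[OF T k] by auto
    show "{T k c..1} \<subseteq> T k ` {0..c}"
      using IVT2'[of "T k" c _ 0, OF _ _ c cc] classT_at_0[OF T k] by force
  qed
  have inv: "\<forall>x\<in>{0..c}. holdT T k c (T k x) = x"
  proof
    fix x assume x: "x \<in> {0..c}"
    have t1: "T k x \<le> 1" using classT_range[OF T k] x by auto
    have "T k (holdT T k c (T k x)) = T k x"
      using holdT_on_curve t1 classT_anti[OF T k] x by auto
    then show "holdT T k c (T k x) = x"
      using classT_inj[OF T k] holdT_bounds[OF t1] x by auto
  qed
  have "continuous_on {T k c..1} (holdT T k c)"
    using continuous_on_inv[OF cc compact_Icc inv] img by simp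
  moreover have "continuous_on {0..T k c} (holdT T k c)"
    using continuous_on_cong[of "{0..T k c}" "{0..T k c}" "holdT T k c" "\<lambda>_. c"] holdT_before_curve
    by (simp add: continuous_on_const)
  moreover have "{0..1} = {0..T k c} \<union> {T k c..1}" using classT_range[OF T k c] by auto
  ultimately show ?thesis using continuous_on_closed_Un[of "{0..T k c}" "{T k c..1}"] by simp
qed

end

section \<open>Player II's action rule \<open>actT\<close>\<close>

lemma actT_bounds:
  assumes T: "classT T" and k: "1 \<le> k" and s: "s \<le> 1" and b1: "0 \<le> \<beta> 1"
  shows "s \<le> actT T \<beta> k s \<and> actT T \<beta> k s \<le> 1"
proof -
  have "1 \<in> {t \<in> {s..1}. T k (\<beta> t) \<le> t}" using classT_range[OF T k b1] s by auto
  then show ?thesis unfolding actT_def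
    by (auto intro!: cInf_greatest cInf_lower intro: bdd_belowI[of _ s])
qed

text \<open>Against a continuous path the defining infimum is attained: at Player II's action moment
  the curve \<open>t = T k (\<beta> t)\<close> has been reached.\<close>
lemma actT_attained:
  assumes T: "classT T" and k: "1 \<le> k" and s: "0 \<le> s" "s \<le> 1"
    and cont: "continuous_on {0..1} \<beta>" and nn: "\<forall>t\<in>{0..1}. 0 \<le> \<beta> t"
  shows "T k (\<beta> (actT T \<beta> k s)) \<le> actT T \<beta> k s"
proof -
  let ?S = "{t \<in> {s..1}. T k (\<beta> t) \<le> t}"
  have "continuous_on {0..1} (\<lambda>t. T k (\<beta> t) - t)"
    by (intro continuous_intros continuous_on_compose2[OF classT_continuous[OF T k] cont])
       (use nn in auto)
  then have "continuous_on {s..1} (\<lambda>t. T k (\<beta> t) - t)"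
    by (rule continuous_on_subset) (use s in auto)
  from continuous_closed_preimage[OF this closed_atLeastAtMost, of "{..0}"]
  have "closed ?S" by (simp add: vimage_def Int_def)
  moreover have "1 \<in> ?S" using classT_range[OF T k, of "\<beta> 1"] nn s by auto
  ultimately have "Inf ?S \<in> ?S" by (intro closed_contains_Inf) (auto intro: bdd_belowI[of _ s])
  then show ?thesis unfolding actT_def by simp
qed

lemma actT_on_curve:
  assumes T: "classT T" and k: "1 \<le> k" and s: "0 \<le> s" "s \<le> 1"
    and cont: "continuous_on {0..1} \<beta>" and nn: "\<forall>t\<in>{0..1}. 0 \<le> \<beta> t"
    and const: "\<forall>t\<in>{0..s}. \<beta> t = \<beta> 0" and sT: "s \<le> T k (\<beta> 0)"
  defines "e \<equiv> actT T \<beta> k s"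
  shows "s \<le> e \<and> e \<le> 1 \<and> T k (\<beta> e) = e \<and> (\<forall>\<tau>\<in>{0..e}. \<tau> \<le> T k (\<beta> \<tau>))"
proof -
  let ?g = "\<lambda>t. T k (\<beta> t) - t"
  have e: "s \<le> e" "e \<le> 1" using actT_bounds[OF T k s(2)] nn unfolding e_def by auto
  have above: "\<tau> \<le> T k (\<beta> \<tau>)" if "0 \<le> \<tau>" "\<tau> < e" for \<tau>
  proof (cases "\<tau> \<le> s")
    case True then show ?thesis using bspec[OF const, of \<tau>] sT that by simp
  next
    case False
    show ?thesis
    proof (rule ccontr)
      assume "\<not> ?thesis"
      then have "\<tau> \<in> {t \<in> {s..1}. T k (\<beta> t) \<le> t}" using False that e by auto
      then have "e \<le> \<tau>" unfolding e_def actT_def by (auto intro: cInf_lower bdd_belowI[of _ s])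
      then show False using that by simp
    qed
  qed
  have "e \<le> T k (\<beta> e)"
  proof (cases "0 < e")
    case True
    have gc: "continuous_on {0..1} ?g"
      by (intro continuous_intros continuous_on_compose2[OF classT_continuous[OF T k] cont])
         (use nn in auto)
    have "0 \<le> ?g e"
    proof (rule continuous_ge_on_closure[where S = "{0..<e}" and f = ?g])
      show "continuous_on (closure {0..<e}) ?g" using gc e True by (auto intro: continuous_on_subset)
      show "e \<in> closure {0..<e}" using True by simp
    qed (use above in auto)
    then show ?thesis by simp
  next
    case False then have "e = 0" "s = 0" using s e by auto
    then show ?thesis using sT by simp
  qed
  moreover have "\<forall>\<tau>\<in>{0..e}. \<tau> \<le> T k (\<beta> \<tau>)"
    using above \<open>e \<le> T k (\<beta> e)\<close> by (metis atLeastAtMost_iff order_less_le)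
  ultimately show ?thesis using e actT_attained[OF T k s cont nn] unfolding e_def by auto
qed

lemma eta_chain:
  assumes ord: "\<forall>j. 1 \<le> j \<and> j < K \<longrightarrow> \<eta> (Suc j) \<le> (\<eta> j :: real)"
    and ij: "1 \<le> i" "i \<le> j" "j \<le> K"
  shows "\<eta> j \<le> \<eta> i"
  using ij(2,3)
proof (induction j rule: dec_induct)
  case (step n)
  then have "\<eta> (Suc n) \<le> \<eta> n" using ord ij(1) by auto
  then show ?case using step by simp
qed simp

section \<open>Player I's failure factor\<close>

lemma failure_range: "0 \<le> 1 - phiI P1 \<beta> t1 t2 \<and> 1 - phiI P1 \<beta> t1 t2 \<le> 1"
  unfolding phiI_def Let_def by (auto simp: enn2real_nonneg)

lemma failure_ge_exp:
  assumes J: "(\<integral>\<^sup>+\<tau>\<in>{t1..t2}. ennreal (- ln (1 - P1 \<tau>)) \<partial>interval_measure (\<lambda>t. - \<beta> (clamp01 t)))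
              \<le> ennreal D" and D: "0 \<le> D"
  shows "exp (- D) \<le> 1 - phiI P1 \<beta> t1 t2"
proof -
  let ?J = "\<integral>\<^sup>+\<tau>\<in>{t1..t2}. ennreal (- ln (1 - P1 \<tau>)) \<partial>interval_measure (\<lambda>t. - \<beta> (clamp01 t))"
  have "?J \<noteq> \<infinity>" using le_less_trans[OF J ennreal_less_top] by simp
  moreover have "enn2real ?J \<le> D" using enn2real_mono[OF J] D by simp
  ultimately show ?thesis unfolding phiI_def Let_def by simp
qed

lemma failure_le_exp:
  assumes J: "ennreal D \<le> (\<integral>\<^sup>+\<tau>\<in>{t1..t2}. ennreal (- ln (1 - P1 \<tau>)) \<partial>interval_measure (\<lambda>t. - \<beta> (clamp01 t)))"
    and D: "0 \<le> D"
  shows "1 - phiI P1 \<beta> t1 t2 \<le> exp (- D)"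
proof (cases "(\<integral>\<^sup>+\<tau>\<in>{t1..t2}. ennreal (- ln (1 - P1 \<tau>)) \<partial>interval_measure (\<lambda>t. - \<beta> (clamp01 t))) = \<infinity>")
  case False
  then have "D \<le> enn2real (\<integral>\<^sup>+\<tau>\<in>{t1..t2}. ennreal (- ln (1 - P1 \<tau>)) \<partial>interval_measure (\<lambda>t. - \<beta> (clamp01 t)))"
    using enn2real_mono[OF J] D by (simp add: top.not_eq_extremum)
  then show ?thesis using False unfolding phiI_def Let_def by simp
qed (simp add: phiI_def)

lemma failure_without_spending:
  assumes "emeasure (interval_measure (\<lambda>t. - \<beta> (clamp01 t))) {t1..t2} = 0"
  shows "1 - phiI P1 \<beta> t1 t2 = 1"
proof -
  let ?\<mu> = "interval_measure (\<lambda>t. - \<beta> (clamp01 t))"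
  have "(\<integral>\<^sup>+\<tau>\<in>{t1..t2}. ennreal (- ln (1 - P1 \<tau>)) \<partial>?\<mu>) \<le> (\<integral>\<^sup>+\<tau>. \<infinity> * indicator {t1..t2} \<tau> \<partial>?\<mu>)"
    by (rule nn_integral_mono) (auto split: split_indicator)
  also have "\<dots> = 0" using assms by (subst nn_integral_cmult_indicator) auto
  finally show ?thesis unfolding phiI_def Let_def by simp
qed

definition resource_path :: "real \<Rightarrow> (real \<Rightarrow> real) \<Rightarrow> bool" where
  "resource_path c \<beta> \<longleftrightarrow> continuous_on {0..1} \<beta> \<and> (\<forall>s t. 0 \<le> s \<and> s \<le> t \<and> t \<le> 1 \<longrightarrow> \<beta> t \<le> \<beta> s)
     \<and> (\<forall>t\<in>{0..1}. 0 \<le> \<beta> t) \<and> \<beta> 0 \<le> c"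

lemma resource_pathD:
  assumes "resource_path c \<beta>"
  shows "continuous_on {0..1} \<beta>" "\<forall>s t. 0 \<le> s \<and> s \<le> t \<and> t \<le> 1 \<longrightarrow> \<beta> t \<le> \<beta> s"
    "\<And>t. 0 \<le> t \<Longrightarrow> t \<le> 1 \<Longrightarrow> 0 \<le> \<beta> t" "\<And>t. 0 \<le> t \<Longrightarrow> t \<le> 1 \<Longrightarrow> \<beta> t \<le> \<beta> 0" "\<beta> 0 \<le> c"
  using assms unfolding resource_path_def by auto

lemma resource_path_levels:
  assumes \<beta>: "resource_path c \<beta>" and st: "0 \<le> s" "s \<le> t" "t \<le> 1"
  shows "0 \<le> \<beta> t" "\<beta> t \<le> \<beta> s" "\<beta> s \<le> c"
proof -
  show "0 \<le> \<beta> t" "\<beta> t \<le> \<beta> s" using resource_pathD(2,3)[OF \<beta>] st by auto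
  have "\<beta> s \<le> \<beta> 0" by (rule resource_pathD(4)[OF \<beta>]) (use st in auto)
  then show "\<beta> s \<le> c" using resource_pathD(5)[OF \<beta>] by linarith
qed

lemma resource_path_frozen:
  assumes \<beta>: "resource_path c \<beta>" and s: "s \<le> 1" and frozen: "\<beta> s = \<beta> 0"
  shows "\<forall>t\<in>{0..s}. \<beta> t = \<beta> 0"
proof
  fix t assume "t \<in> {0..s}"
  then have "\<beta> s \<le> \<beta> t" "\<beta> t \<le> \<beta> 0" using resource_path_levels[OF \<beta>, of 0 t] resource_path_levels[OF \<beta>, of t s] s by auto
  then show "\<beta> t = \<beta> 0" using frozen by simp
qed

lemma consumption_fun_resource_path: "consumption_fun a \<alpha> \<Longrightarrow> resource_path a \<alpha>"
  unfolding consumption_fun_def resource_path_def by auto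

lemma shift_cons_max: "shift_cons \<beta> e = (\<lambda>t. \<beta> (max t e))"
  by (auto simp: shift_cons_def fun_eq_iff max_def)

text \<open>After the first action at \<open>e\<close>, the game restarts with the path frozen on [0,e].\<close>
lemma shift_cons_resource_path:
  assumes \<beta>: "resource_path c \<beta>" and e: "0 \<le> e" "e \<le> 1"
  shows "resource_path (\<beta> e) (shift_cons \<beta> e)" "shift_cons \<beta> e 0 = \<beta> e"
    "\<forall>t\<in>{0..e}. shift_cons \<beta> e t = shift_cons \<beta> e 0" "\<And>t. e \<le> t \<Longrightarrow> shift_cons \<beta> e t = \<beta> t"
proof -
  note \<beta>D = resource_pathD[OF \<beta>]
  have "continuous_on {0..1} (shift_cons \<beta> e)" unfolding shift_cons_max
    by (rule continuous_on_compose2[OF \<beta>D(1)]) (auto intro!: continuous_intros simp: e)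
  then show "resource_path (\<beta> e) (shift_cons \<beta> e)"
    unfolding resource_path_def shift_cons_max using \<beta>D(2,3) e by (auto simp: max_def)
qed (use e in \<open>auto simp: shift_cons_max max_def\<close>)

lemma actT_cong:
  assumes "\<And>t. s \<le> t \<Longrightarrow> \<beta>' t = \<beta> t"
  shows "actT T \<beta>' j s = actT T \<beta> j s"
  unfolding actT_def using assms by (metis (no_types, lifting) atLeastAtMost_iff)

section \<open>The candidate value and the balance equations\<close>

text \<open>The game context.  \<open>E k x\<close> is Player I's failure probability when he spends
  resource \<open>x\<close> along the curve \<open>t = T k x\<close>, \<open>Pr k x\<close> is the probability that Player II's
  units \<open>1..k\<close> all fail at the moments \<open>T i x\<close>; the hypothesis says \<open>E k x + Pr k x = 1\<close>.
  \<open>V k c = A1 - (A1 + A2) W k c\<close> is the value of the subgame with resource \<open>c\<close>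
  against \<open>k\<close> units.\<close>
locale game =
  fixes P1 P2 :: "real \<Rightarrow> real" and A1 A2 a :: real and m :: nat
    and T :: "nat \<Rightarrow> real \<Rightarrow> real"
  assumes P1: "effectiveness P1" and P2: "effectiveness P2"
    and A1: "0 < A1" and A2: "0 < A2" and a: "0 < a"
    and T: "classT T"
    and hyp: "\<forall>x\<in>{0<..a}. \<forall>k\<in>{1..m}.
           exp (integral {0..x} (\<lambda>y. ln (1 - P1 (T k y))))
           + (\<Prod>i=1..k. (1 - P2 (T i x))) = 1"
begin

definition I :: "nat \<Rightarrow> real \<Rightarrow> real" where
  "I k x = integral {0..x} (\<lambda>y. ln (1 - P1 (T k y)))"
definition E :: "nat \<Rightarrow> real \<Rightarrow> real" where
  "E k x = exp (I k x)"
definition Pr :: "nat \<Rightarrow> real \<Rightarrow> real" where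
  "Pr k x = (\<Prod>i=1..k. (1 - P2 (T i x)))"
definition W :: "nat \<Rightarrow> real \<Rightarrow> real" where
  "W k c = (if k = 0 then (if 0 < c then 0 else A1 / (A1 + A2)) else E k c)"
definition V :: "nat \<Rightarrow> real \<Rightarrow> real" where
  "V k c = A1 - (A1 + A2) * W k c"

lemma balance: "0 < x \<Longrightarrow> x \<le> a \<Longrightarrow> 1 \<le> k \<Longrightarrow> k \<le> m \<Longrightarrow> E k x + Pr k x = 1"
  using hyp unfolding E_def I_def Pr_def by auto

lemma V_0: "V 0 c = (if 0 < c then A1 else 0)"
  unfolding V_def W_def using A1 A2 by auto

lemma Pr_nonneg: assumes "0 \<le> x" shows "0 \<le> Pr k x"
  unfolding Pr_def
proof (rule prod_nonneg)
  fix i assume "i \<in> {1..k}"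
  then have "0 \<le> T i x \<and> T i x \<le> 1" using classT_range[OF T, of i x] assms by auto
  then show "0 \<le> 1 - P2 (T i x)" using effectiveness_range[OF P2, of "T i x"] by auto
qed

lemma W_balance: assumes "0 < x" "x \<le> a" "k \<le> m" shows "W k x = 1 - Pr k x"
proof (cases "k = 0")
  case False
  then show ?thesis using balance[OF assms(1,2), of k] assms(3) by (simp add: W_def)
qed (use assms in \<open>simp add: W_def Pr_def\<close>)

text \<open>Bellman balance for one unit of Player II acting when Player I has resource \<open>c\<close>:
  acting on the curve \<open>T (Suc k)\<close> makes both players indifferent, acting earlier is worse
  for Player II.\<close>
lemma bellman_on_curve:
  assumes k: "Suc k \<le> m" and c: "0 \<le> c" "c \<le> a"
  shows "P2 (T (Suc k) c) + (1 - P2 (T (Suc k) c)) * W k c = E (Suc k) c"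
proof (cases "c = 0")
  case True
  then show ?thesis using classT_at_0[OF T, of "Suc k"] effectiveness_at_1[OF P2] by (simp add: E_def I_def)
next
  case False
  then have "0 < c" using c by simp
  then have E: "E (Suc k) c = 1 - Pr k c * (1 - P2 (T (Suc k) c))" and W: "W k c = 1 - Pr k c"
    using balance[of c "Suc k"] W_balance[of c k] c k by (simp_all add: Pr_def)
  show ?thesis unfolding E W by (simp add: algebra_simps)
qed

lemma bellman_before_curve:
  assumes k: "Suc k \<le> m" and c: "0 \<le> c" "c \<le> a" and e: "0 \<le> e" "e \<le> T (Suc k) c"
  shows "P2 e + (1 - P2 e) * W k c \<le> E (Suc k) c"
proof -
  have T1: "T (Suc k) c \<le> 1" using classT_range[OF T _ c(1)] by simp
  have p: "0 \<le> P2 e" "P2 e \<le> P2 (T (Suc k) c)" "P2 e \<le> 1"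
    using effectiveness_range[OF P2, of e] effectiveness_mono[OF P2 e] e T1 by auto
  show ?thesis
  proof (cases "c = 0")
    case True
    have "W k c \<le> 1" using True A1 A2 by (auto simp: W_def E_def I_def)
    then have "(1 - P2 e) * W k c \<le> 1 - P2 e" using p by (simp add: mult_left_le)
    then show ?thesis using True by (simp add: E_def I_def)
  next
    case False
    then have "0 < c" using c by simp
    then have E: "E (Suc k) c = 1 - Pr k c * (1 - P2 (T (Suc k) c))" and W: "W k c = 1 - Pr k c"
      using balance[of c "Suc k"] W_balance[of c k] c k by (simp_all add: Pr_def)
    have "P2 e * Pr k c \<le> P2 (T (Suc k) c) * Pr k c"
      using Pr_nonneg[OF c(1), of k] p by (intro mult_right_mono) auto
    then show ?thesis unfolding E W by (simp add: algebra_simps)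
  qed
qed

lemma integrand_nonpos: assumes "1 \<le> k" "0 \<le> y" shows "ln (1 - P1 (T k y)) \<le> 0"
proof -
  have "0 \<le> 1 - P1 (T k y) \<and> 1 - P1 (T k y) \<le> 1"
    using classT_range[OF T assms] effectiveness_range[OF P1, of "T k y"] by auto
  then show ?thesis by (cases "1 - P1 (T k y) = 0") auto
qed

text \<open>The curve integrand is integrable: otherwise \<open>E k x = 1\<close>, so by the hypothesis some
  unit of Player II would succeed with certainty before time 1, which is impossible.\<close>
lemma integrand_integrable:
  assumes k: "1 \<le> k" "k \<le> m" and x: "0 < x" "x \<le> a"
  shows "(\<lambda>y. ln (1 - P1 (T k y))) integrable_on {0..x}"
proof (rule ccontr)
  assume "\<not> ?thesis"
  then have "Pr k x = 0" using balance[OF x k] by (simp add: E_def I_def not_integrable_integral)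
  then obtain i where i: "i \<in> {1..k}" "P2 (T i x) = 1" unfolding Pr_def by auto
  have "0 < T i x" "T i x < 1" using classT_range[OF T, of i x] classT_less_1[OF T _ x(1)] i x by auto
  then show False using effectiveness_less_1[OF P2, of "T i x"] i by simp
qed

lemma nn_integral_curve:
  assumes k: "1 \<le> k" "k \<le> m" and c: "0 \<le> c'" "c' \<le> c" "c \<le> a"
  shows "(\<integral>\<^sup>+y. ennreal (- ln (1 - P1 (T k y))) * indicator {c'..c} y \<partial>lborel) = ennreal (I k c' - I k c)"
    "0 \<le> I k c' - I k c"
proof -
  let ?f = "\<lambda>y. ln (1 - P1 (T k y))"
  have "(\<integral>\<^sup>+y. ennreal (- ?f y) * indicator {c'..c} y \<partial>lborel) = ennreal (I k c' - I k c)
        \<and> 0 \<le> I k c' - I k c"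
  proof (cases "c = 0")
    case True
    then have "c' = 0" using c by simp
    have "(\<integral>\<^sup>+y. ennreal (- ?f y) * indicator {c'..c} y \<partial>lborel) \<le> (\<integral>\<^sup>+y. \<infinity> * indicator {0::real} y \<partial>lborel)"
      by (rule nn_integral_mono) (use True \<open>c' = 0\<close> in \<open>auto split: split_indicator\<close>)
    also have "\<dots> = 0" by (subst nn_integral_cmult_indicator) auto
    finally show ?thesis using True \<open>c' = 0\<close> by simp
  next
    case False
    have fi: "?f integrable_on {0..c}" using integrand_integrable[OF k] False c by simp
    have comb: "integral {0..c'} ?f + integral {c'..c} ?f = integral {0..c} ?f"
      using Henstock_Kurzweil_Integration.integral_combine[OF c(1,2) fi] .
    have has: "((\<lambda>y. - ?f y) has_integral (- integral {c'..c} ?f)) {c'..c}"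
      using has_integral_neg[OF integrable_integral[OF integrable_subinterval_real[OF fi]]] c by simp
    have nn: "\<And>y. y \<in> {c'..c} \<Longrightarrow> 0 \<le> - ?f y" using integrand_nonpos[OF k(1)] c by auto
    have "(\<integral>\<^sup>+y. ennreal (- ?f y) * indicator {c'..c} y \<partial>lborel) = ennreal (- integral {c'..c} ?f)"
      using nn_integral_has_integral_lebesgue'[OF nn has] by simp
    moreover have "0 \<le> - integral {c'..c} ?f" using has_integral_nonneg[OF has] nn by auto
    ultimately show ?thesis using comb by (simp add: I_def algebra_simps)
  qed
  then show "(\<integral>\<^sup>+y. ennreal (- ?f y) * indicator {c'..c} y \<partial>lborel) = ennreal (I k c' - I k c)"
    "0 \<le> I k c' - I k c" by auto
qed

definition f_clamped :: "nat \<Rightarrow> real \<Rightarrow> real" where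
  "f_clamped k y = ln (1 - P1 (T k (max 0 (min a y))))"

lemma f_clamped_measurable:
  assumes k: "1 \<le> k" shows "(\<lambda>y. ennreal (- f_clamped k y)) \<in> borel_measurable borel"
proof -
  have c1: "continuous_on UNIV (\<lambda>y. T k (max 0 (min a y)))"
    by (rule continuous_on_compose2[OF classT_continuous[OF T k]]) (auto intro!: continuous_intros)
  have "T k (max 0 (min a y)) \<in> {0..1}" for y using classT_range[OF T k, of "max 0 (min a y)"] by auto
  then have "continuous_on UNIV (\<lambda>y. 1 - P1 (T k (max 0 (min a y))))"
    by (intro continuous_intros continuous_on_compose2[OF effectiveness_continuous[OF P1] c1]) auto
  then have [measurable]: "(\<lambda>y. 1 - P1 (T k (max 0 (min a y)))) \<in> borel_measurable borel"
    by (rule borel_measurable_continuous_onI)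
  show ?thesis unfolding f_clamped_def by measurable
qed

lemma f_clamped_eq: "0 \<le> y \<Longrightarrow> y \<le> a \<Longrightarrow> f_clamped k y = ln (1 - P1 (T k y))"
  unfolding f_clamped_def by (simp add: max_def min_def)

lemma integrand_le_curve:
  assumes K: "1 \<le> K" and y: "0 < y" and \<tau>: "0 \<le> \<tau>" "\<tau> \<le> T K y"
  shows "- ln (1 - P1 \<tau>) \<le> - ln (1 - P1 (T K y))"
proof -
  have T1: "T K y < 1" using classT_less_1[OF T K y] .
  have "P1 \<tau> \<le> P1 (T K y)" using effectiveness_mono[OF P1 \<tau>] T1 by simp
  moreover have "P1 (T K y) < 1"
    using effectiveness_less_1[OF P1 _ T1] classT_range[OF T K, of y] y by simp
  ultimately show ?thesis by (simp add: ln_mono)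
qed

lemma stieltjes_below_curve:
  assumes K: "1 \<le> K" "K \<le> m" and \<beta>: "resource_path a \<beta>" and e: "0 \<le> e" "e \<le> 1"
    and below: "\<forall>\<tau>\<in>{0..e}. \<tau> \<le> T K (\<beta> \<tau>)"
  shows "(\<integral>\<^sup>+\<tau>\<in>{0..e}. ennreal (- ln (1 - P1 \<tau>)) \<partial>interval_measure (\<lambda>t. - \<beta> (clamp01 t)))
         \<le> ennreal (I K (\<beta> e) - I K (\<beta> 0))"
proof -
  note \<beta>D = resource_pathD[OF \<beta>]
  define H where "H = (\<lambda>y. if y \<le> 0 then \<infinity> else ennreal (- f_clamped K y))"
  have Hm: "H \<in> borel_measurable borel" unfolding H_def using f_clamped_measurable[OF K(1)] by measurable
  have "(\<integral>\<^sup>+\<tau>\<in>{0..e}. ennreal (- ln (1 - P1 \<tau>)) \<partial>interval_measure (\<lambda>t. - \<beta> (clamp01 t)))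
        \<le> (\<integral>\<^sup>+\<tau>. H (\<beta> \<tau>) * indicator {0..e} \<tau> \<partial>interval_measure (\<lambda>t. - \<beta> (clamp01 t)))"
  proof (intro nn_integral_mono)
    fix \<tau>
    have "ennreal (- ln (1 - P1 \<tau>)) \<le> H (\<beta> \<tau>)" if "\<tau> \<in> {0..e}" "0 < \<beta> \<tau>"
      using integrand_le_curve[OF K(1) that(2), of \<tau>] below that f_clamped_eq[of "\<beta> \<tau>" K]
        \<beta>D(4)[of \<tau>] \<beta>D(5) e unfolding H_def by (auto intro!: ennreal_leI)
    then show "ennreal (- ln (1 - P1 \<tau>)) * indicator {0..e} \<tau> \<le> H (\<beta> \<tau>) * indicator {0..e} \<tau>"
      unfolding H_def by (auto split: split_indicator)
  qed
  also have "\<dots> = (\<integral>\<^sup>+y. H y * indicator {\<beta> e..\<beta> 0} y \<partial>lborel)"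
    using nn_integral_path_substitution[OF \<beta>D(1,2) _ e Hm] by simp
  also have "\<dots> = (\<integral>\<^sup>+y. ennreal (- ln (1 - P1 (T K y))) * indicator {\<beta> e..\<beta> 0} y \<partial>lborel)"
  proof (rule nn_integral_cong_AE)
    show "AE y in lborel. H y * indicator {\<beta> e..\<beta> 0} y = ennreal (- ln (1 - P1 (T K y))) * indicator {\<beta> e..\<beta> 0} y"
      using AE_lborel_singleton[of "0::real"]
    proof eventually_elim
      case (elim y)
      then show ?case using f_clamped_eq[of y K] \<beta>D(3)[of e] \<beta>D(5) e
        unfolding H_def by (auto split: split_indicator)
    qed
  qed
  also have "\<dots> = ennreal (I K (\<beta> e) - I K (\<beta> 0))"
    using nn_integral_curve(1)[OF K] \<beta>D(3,4,5) e by simp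
  finally show ?thesis .
qed

lemma stieltjes_on_curve:
  assumes K: "1 \<le> K" "K \<le> m" and \<beta>: "resource_path a \<beta>" and e: "0 \<le> s'" "s' \<le> e" "e \<le> 1"
    and on: "\<forall>\<tau>\<in>{s'..e}. T K (\<beta> \<tau>) = \<tau>"
  shows "ennreal (I K (\<beta> e) - I K (\<beta> s'))
         \<le> (\<integral>\<^sup>+\<tau>\<in>{0..e}. ennreal (- ln (1 - P1 \<tau>)) \<partial>interval_measure (\<lambda>t. - \<beta> (clamp01 t)))"
proof -
  note \<beta>D = resource_pathD[OF \<beta>]
  define G where "G = (\<lambda>y. ennreal (- f_clamped K y))"
  have Gm: "G \<in> borel_measurable borel" unfolding G_def using f_clamped_measurable[OF K(1)] .
  note lv = resource_path_levels[OF \<beta> e]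
  have "ennreal (I K (\<beta> e) - I K (\<beta> s'))
        = (\<integral>\<^sup>+y. ennreal (- ln (1 - P1 (T K y))) * indicator {\<beta> e..\<beta> s'} y \<partial>lborel)"
    using nn_integral_curve(1)[OF K lv] by simp
  also have "\<dots> = (\<integral>\<^sup>+y. G y * indicator {\<beta> e..\<beta> s'} y \<partial>lborel)"
    using lv f_clamped_eq[of _ K] unfolding G_def
    by (intro nn_integral_cong) (auto split: split_indicator)
  also have "\<dots> = (\<integral>\<^sup>+\<tau>. G (\<beta> \<tau>) * indicator {s'..e} \<tau> \<partial>interval_measure (\<lambda>t. - \<beta> (clamp01 t)))"
    using nn_integral_path_substitution[OF \<beta>D(1,2) e Gm] by simp
  also have "\<dots> = (\<integral>\<^sup>+\<tau>. ennreal (- ln (1 - P1 \<tau>)) * indicator {s'..e} \<tau> \<partial>interval_measure (\<lambda>t. - \<beta> (clamp01 t)))"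
  proof (intro nn_integral_cong)
    fix \<tau>
    have "0 \<le> \<beta> \<tau> \<and> \<beta> \<tau> \<le> a" if "\<tau> \<in> {s'..e}"
      using resource_path_levels[OF \<beta>, of \<tau> \<tau>] that e by auto
    then show "G (\<beta> \<tau>) * indicator {s'..e} \<tau> = ennreal (- ln (1 - P1 \<tau>)) * indicator {s'..e} \<tau>"
      using on f_clamped_eq[of "\<beta> \<tau>" K] unfolding G_def by (auto split: split_indicator)
  qed
  also have "\<dots> \<le> (\<integral>\<^sup>+\<tau>\<in>{0..e}. ennreal (- ln (1 - P1 \<tau>)) \<partial>interval_measure (\<lambda>t. - \<beta> (clamp01 t)))"
    by (rule nn_integral_mono) (use e in \<open>auto split: split_indicator\<close>)
  finally show ?thesis .
qed

lemma failure_upper: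
  assumes K: "1 \<le> K" "K \<le> m" and \<beta>: "resource_path a \<beta>" and e: "0 \<le> e" "e \<le> 1"
    and below: "\<forall>\<tau>\<in>{0..e}. \<tau> \<le> T K (\<beta> \<tau>)"
  shows "E K (\<beta> 0) \<le> (1 - phiI P1 \<beta> 0 e) * E K (\<beta> e)"
proof -
  note \<beta>D = resource_pathD[OF \<beta>]
  have D: "0 \<le> I K (\<beta> e) - I K (\<beta> 0)"
    using nn_integral_curve(2)[OF K] \<beta>D(3,4,5) e by simp
  have "E K (\<beta> 0) = E K (\<beta> e) * exp (- (I K (\<beta> e) - I K (\<beta> 0)))"
    unfolding E_def by (simp add: exp_add[symmetric])
  also have "\<dots> \<le> E K (\<beta> e) * (1 - phiI P1 \<beta> 0 e)"
    using failure_ge_exp[OF stieltjes_below_curve[OF K \<beta> e below] D]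
    by (intro mult_left_mono) (auto simp: E_def)
  finally show ?thesis by (simp add: mult.commute)
qed

lemma failure_lower:
  assumes K: "1 \<le> K" "K \<le> m" and \<beta>: "resource_path a \<beta>" and e: "0 \<le> s'" "s' \<le> e" "e \<le> 1"
    and on: "\<forall>\<tau>\<in>{s'..e}. T K (\<beta> \<tau>) = \<tau>"
  shows "(1 - phiI P1 \<beta> 0 e) * E K (\<beta> e) \<le> E K (\<beta> s')"
proof -
  note \<beta>D = resource_pathD[OF \<beta>]
  note lv = resource_path_levels[OF \<beta> e]
  have "(1 - phiI P1 \<beta> 0 e) * E K (\<beta> e) \<le> exp (- (I K (\<beta> e) - I K (\<beta> s'))) * E K (\<beta> e)"
    using failure_le_exp[OF stieltjes_on_curve[OF K \<beta> e on] nn_integral_curve(2)[OF K lv]]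
    by (intro mult_right_mono) (auto simp: E_def)
  also have "\<dots> = E K (\<beta> s')" unfolding E_def by (simp add: exp_add[symmetric])
  finally show ?thesis .
qed

text \<open>One step of the recursion defining \<open>K\<close>: Player I fails up to Player II's action
  with probability \<open>X\<close>, Player II then succeeds with probability \<open>p\<close>.\<close>
lemma payoff_step_upper:
  assumes X: "0 \<le> X" "X \<le> 1" and p: "0 \<le> p" "p \<le> 1"
    and IH: "K' \<le> V k c'" and bal: "p + (1 - p) * W k c' = E (Suc k) c'"
    and surv: "E (Suc k) c \<le> X * E (Suc k) c'"
  shows "A1 * (1 - X) - A2 * X * p + (1 - p) * X * K' \<le> V (Suc k) c"
proof -
  have "(1 - p) * X * K' \<le> (1 - p) * X * V k c'" using IH X p by (intro mult_left_mono) auto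
  then have "A1 * (1 - X) - A2 * X * p + (1 - p) * X * K' \<le> A1 - (A1 + A2) * (X * (p + (1 - p) * W k c'))"
    unfolding V_def by (simp add: algebra_simps)
  also have "\<dots> \<le> A1 - (A1 + A2) * E (Suc k) c"
    using mult_left_mono[OF surv, of "A1 + A2"] bal A1 A2 by simp
  finally show ?thesis unfolding V_def W_def by simp
qed

lemma payoff_step_lower:
  assumes X: "0 \<le> X" "X \<le> 1" and p: "0 \<le> p" "p \<le> 1"
    and IH: "V k c' \<le> K'" and bal: "X * (p + (1 - p) * W k c') \<le> E (Suc k) c"
  shows "V (Suc k) c \<le> A1 * (1 - X) - A2 * X * p + (1 - p) * X * K'"
proof -
  have "(1 - p) * X * V k c' \<le> (1 - p) * X * K'" using IH X p by (intro mult_left_mono) auto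
  moreover have "A1 - (A1 + A2) * E (Suc k) c \<le> A1 - (A1 + A2) * (X * (p + (1 - p) * W k c'))"
    using mult_left_mono[OF bal, of "A1 + A2"] A1 A2 by simp
  ultimately show ?thesis unfolding V_def W_def by (simp add: algebra_simps)
qed

lemma Kpay_Suc:
  "Kpay P1 P2 A1 A2 \<beta> \<eta> (Suc k) =
   (let e = \<eta> (Suc k); X = 1 - phiI P1 \<beta> 0 e in
     A1 * (1 - X) - A2 * X * P2 e + (1 - P2 e) * X * Kpay P1 P2 A1 A2 (shift_cons \<beta> e) \<eta> k)"
  by (simp add: Let_def)

section \<open>Upper bound: Player II follows his T-strategy\<close>

text \<open>Invariant of the upper-bound induction: Player I's path is frozen on [0,s], and
  Player II, restarting at time \<open>s\<close> with \<open>k\<close> units, acts by his T-strategy.\<close>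
definition II_follows_T :: "nat \<Rightarrow> (real \<Rightarrow> real) \<Rightarrow> real \<Rightarrow> (nat \<Rightarrow> real) \<Rightarrow> bool" where
  "II_follows_T k \<beta> s \<eta> \<longleftrightarrow> resource_path a \<beta> \<and> 0 \<le> s \<and> s \<le> 1 \<and> \<beta> s = \<beta> 0
     \<and> (1 \<le> k \<longrightarrow> s \<le> T k (\<beta> 0) \<and> \<eta> k = actT T \<beta> k s)
     \<and> (\<forall>j. 1 \<le> j \<and> j < k \<longrightarrow> \<eta> j = actT T \<beta> j (\<eta> (Suc j)))"

lemma II_first_action:
  assumes C: "II_follows_T k \<beta> s \<eta>" and k: "1 \<le> k"
  shows "s \<le> \<eta> k \<and> \<eta> k \<le> 1 \<and> T k (\<beta> (\<eta> k)) = \<eta> k \<and> (\<forall>\<tau>\<in>{0..\<eta> k}. \<tau> \<le> T k (\<beta> \<tau>))"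
proof -
  have \<beta>: "resource_path a \<beta>" and s: "0 \<le> s" "s \<le> 1" and frozen: "\<beta> s = \<beta> 0"
    and sT: "s \<le> T k (\<beta> 0)" and \<eta>k: "\<eta> k = actT T \<beta> k s"
    using C k unfolding II_follows_T_def by auto
  have nn: "\<forall>t\<in>{0..1}. 0 \<le> \<beta> t" using resource_pathD(3)[OF \<beta>] by auto
  show ?thesis unfolding \<eta>k
    using actT_on_curve[OF T k s resource_pathD(1)[OF \<beta>] nn resource_path_frozen[OF \<beta> s(2) frozen] sT] .
qed

lemma II_later_actions:
  assumes C: "II_follows_T k \<beta> s \<eta>" and i: "1 \<le> i" "i \<le> k"
  shows "\<eta> k \<le> \<eta> i \<and> \<eta> i \<le> 1"
  using i(2)
proof (induction i rule: inc_induct)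
  case base
  then show ?case using II_first_action[OF C] i by auto
next
  case (step n)
  have "\<eta> n = actT T \<beta> n (\<eta> (Suc n))" using C step(1,2) i(1) unfolding II_follows_T_def by auto
  moreover have "0 \<le> \<beta> 1" using C resource_pathD(3) unfolding II_follows_T_def by auto
  ultimately show ?case using actT_bounds[OF T _ _, of n "\<eta> (Suc n)" \<beta>] step i(1) by auto
qed

lemma II_follows_T_shift:
  assumes C: "II_follows_T (Suc k) \<beta> s \<eta>"
  shows "II_follows_T k (shift_cons \<beta> (\<eta> (Suc k))) (\<eta> (Suc k)) \<eta>"
proof -
  define e where "e = \<eta> (Suc k)"
  have \<beta>: "resource_path a \<beta>" and s: "0 \<le> s"
    and acts: "\<forall>j. 1 \<le> j \<and> j < Suc k \<longrightarrow> \<eta> j = actT T \<beta> j (\<eta> (Suc j))"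
    using C unfolding II_follows_T_def by auto
  have e: "0 \<le> e" "e \<le> 1" and Te: "T (Suc k) (\<beta> e) = e"
    using II_first_action[OF C] s unfolding e_def by auto
  note sh = shift_cons_resource_path[OF \<beta> e]
  have "resource_path a (shift_cons \<beta> e)"
    using sh(1) resource_path_levels[OF \<beta>, of 0 e] e unfolding resource_path_def by auto
  moreover have "1 \<le> k \<longrightarrow> e \<le> T k (shift_cons \<beta> e 0) \<and> \<eta> k = actT T (shift_cons \<beta> e) k e"
  proof
    assume k: "1 \<le> k"
    have "e \<le> T k (\<beta> e)"
      using classT_index_anti[OF T k _ resource_pathD(3)[OF \<beta> e], of "Suc k"] Te by simp
    moreover have "actT T (shift_cons \<beta> e) k e = actT T \<beta> k e"
      by (intro actT_cong) (use sh(4) in auto)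
    then have "\<eta> k = actT T (shift_cons \<beta> e) k e" using acts k unfolding e_def by auto
    ultimately show "e \<le> T k (shift_cons \<beta> e 0) \<and> \<eta> k = actT T (shift_cons \<beta> e) k e"
      using sh(2) by simp
  qed
  moreover have "\<eta> j = actT T (shift_cons \<beta> e) j (\<eta> (Suc j))" if "1 \<le> j" "j < k" for j
  proof -
    have "e \<le> \<eta> (Suc j)" using II_later_actions[OF C, of "Suc j"] that unfolding e_def by auto
    then have "actT T (shift_cons \<beta> e) j (\<eta> (Suc j)) = actT T \<beta> j (\<eta> (Suc j))"
      by (intro actT_cong) (use sh(4) in auto)
    then show ?thesis using acts that by auto
  qed
  ultimately show ?thesis using sh(2,4) e unfolding II_follows_T_def e_def by auto
qed

lemma payoff_upper:
  "k \<le> m \<Longrightarrow> II_follows_T k \<beta> s \<eta> \<Longrightarrow> Kpay P1 P2 A1 A2 \<beta> \<eta> k \<le> V k (\<beta> 0)"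
proof (induction k arbitrary: \<beta> s)
  case 0
  then show ?case by (simp add: V_0)
next
  case (Suc k)
  define e where "e = \<eta> (Suc k)"
  have \<beta>: "resource_path a \<beta>" using Suc.prems(2) unfolding II_follows_T_def by simp
  have first: "0 \<le> e" "e \<le> 1" "T (Suc k) (\<beta> e) = e" "\<forall>\<tau>\<in>{0..e}. \<tau> \<le> T (Suc k) (\<beta> \<tau>)"
    using II_first_action[OF Suc.prems(2)] Suc.prems(2) unfolding e_def II_follows_T_def by auto
  note lv = resource_path_levels[OF \<beta> order_refl first(1,2)]
  have IH: "Kpay P1 P2 A1 A2 (shift_cons \<beta> e) \<eta> k \<le> V k (\<beta> e)"
    using Suc.IH[OF _ II_follows_T_shift[OF Suc.prems(2)]] Suc.prems(1)
      shift_cons_resource_path(2)[OF \<beta> first(1,2)] unfolding e_def by simp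
  have "\<beta> e \<le> a" using lv by linarith
  then have bal: "P2 e + (1 - P2 e) * W k (\<beta> e) = E (Suc k) (\<beta> e)"
    using bellman_on_curve[OF Suc.prems(1) lv(1)] first(3) by simp
  have surv: "E (Suc k) (\<beta> 0) \<le> (1 - phiI P1 \<beta> 0 e) * E (Suc k) (\<beta> e)"
    using failure_upper[OF _ Suc.prems(1) \<beta> first(1,2,4)] by simp
  show ?case unfolding Kpay_Suc Let_def e_def[symmetric]
    using failure_range effectiveness_range[OF P2, of e] first
    by (intro payoff_step_upper[OF _ _ _ _ IH bal surv]) auto
qed

section \<open>Lower bound: Player I follows his T-strategy\<close>

text \<open>Invariant of the lower-bound induction: Player I's path is frozen on [0,s], Player II's
  remaining moments \<open>s \<le> \<eta> k \<le> \<dots> \<le> \<eta> 1 \<le> 1\<close> are arbitrary, and on each phase between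
  consecutive actions (with \<open>j\<close> units left) Player I follows his T-strategy \<open>holdT T j\<close>.\<close>
definition I_follows_T :: "nat \<Rightarrow> (real \<Rightarrow> real) \<Rightarrow> real \<Rightarrow> (nat \<Rightarrow> real) \<Rightarrow> bool" where
  "I_follows_T k \<beta> s \<eta> \<longleftrightarrow> resource_path a \<beta> \<and> 0 \<le> s \<and> \<beta> s = \<beta> 0
     \<and> (1 \<le> k \<longrightarrow> s \<le> T k (\<beta> 0) \<and> s \<le> \<eta> k \<and> \<eta> 1 \<le> 1)
     \<and> (\<forall>j. 1 \<le> j \<and> j < k \<longrightarrow> \<eta> (Suc j) \<le> \<eta> j)
     \<and> (\<forall>j t. 1 \<le> j \<and> j \<le> k \<and> (if j = k then s else \<eta> (Suc j)) \<le> t \<and> t \<le> \<eta> j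
            \<longrightarrow> \<beta> t = holdT T j (\<beta> (if j = k then s else \<eta> (Suc j))) t)"

lemma I_follows_TD:
  assumes "I_follows_T k \<beta> s \<eta>"
  shows "resource_path a \<beta>" "0 \<le> s" "\<beta> s = \<beta> 0"
    "1 \<le> k \<Longrightarrow> s \<le> T k (\<beta> 0)" "1 \<le> k \<Longrightarrow> s \<le> \<eta> k" "1 \<le> k \<Longrightarrow> \<eta> 1 \<le> 1"
    "\<forall>j. 1 \<le> j \<and> j < k \<longrightarrow> \<eta> (Suc j) \<le> \<eta> j"
    "\<And>j t. 1 \<le> j \<Longrightarrow> j \<le> k \<Longrightarrow> (if j = k then s else \<eta> (Suc j)) \<le> t \<Longrightarrow> t \<le> \<eta> j
       \<Longrightarrow> \<beta> t = holdT T j (\<beta> (if j = k then s else \<eta> (Suc j))) t"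
  using assms unfolding I_follows_T_def by blast+

text \<open>During the first phase [s,e], Player I holds his resource \<open>c\<close> until the curve
  \<open>T (Suc k)\<close> and then moves along it; whenever Player II acts at \<open>e\<close>, the failure factor
  and the Bellman balance combine to at most the value weight \<open>E (Suc k) c\<close>.\<close>
lemma failure_against_holdT:
  assumes k: "Suc k \<le> m" and \<beta>: "resource_path a \<beta>" and s: "0 \<le> s" "s \<le> e" "e \<le> 1"
    and c: "\<beta> 0 = c" and sT: "s \<le> T (Suc k) c"
    and phase: "\<And>t. s \<le> t \<Longrightarrow> t \<le> e \<Longrightarrow> \<beta> t = holdT T (Suc k) c t"
  shows "(1 - phiI P1 \<beta> 0 e) * (P2 e + (1 - P2 e) * W k (\<beta> e)) \<le> E (Suc k) c"
proof -
  have c_range: "0 \<le> c" "c \<le> a" using resource_path_levels[OF \<beta>, of 0 0] c by auto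
  have e: "0 \<le> e" using s by linarith
  note \<beta>D = resource_pathD[OF \<beta>]
  show ?thesis
  proof (cases "e \<le> T (Suc k) c")
    case True
    txt \<open>Player II acts before the curve is reached: Player I has not spent anything.\<close>
    have "\<beta> e = c" using phase[of e] s holdT_before_curve[OF T _ c_range(1) True] by simp
    then have "emeasure (interval_measure (\<lambda>t. - \<beta> (clamp01 t))) {0..e} = 0"
      using emeasure_path_interval[OF \<beta>D(1,2) order_refl e s(3)] c by simp
    then show ?thesis
      using failure_without_spending bellman_before_curve[OF k c_range e True] \<open>\<beta> e = c\<close> by simp
  next
    case False
    txt \<open>Player II acts on the curve: Player I reached it at \<open>s' = T (Suc k) c\<close> and moved along it.\<close>
    define s' where "s' = T (Suc k) c"
    have s': "0 \<le> s'" "s' \<le> e" "s \<le> s'"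
      using False classT_range[OF T _ c_range(1), of "Suc k"] sT unfolding s'_def by auto
    have on: "\<forall>\<tau>\<in>{s'..e}. T (Suc k) (\<beta> \<tau>) = \<tau>"
      using phase s' holdT_on_curve[OF T _ c_range(1)] s unfolding s'_def by auto
    have "\<beta> s' = c" using phase[of s'] s' holdT_before_curve[OF T _ c_range(1)] unfolding s'_def by simp
    moreover have "(1 - phiI P1 \<beta> 0 e) * E (Suc k) (\<beta> e) \<le> E (Suc k) (\<beta> s')"
      using failure_lower[OF _ k \<beta> s'(1,2) s(3) on] by simp
    moreover have "P2 e + (1 - P2 e) * W k (\<beta> e) = E (Suc k) (\<beta> e)"
    proof -
      note lv = resource_path_levels[OF \<beta> order_refl e s(3)]
      have "T (Suc k) (\<beta> e) = e" using on s' by auto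
      then show ?thesis using bellman_on_curve[OF k lv(1)] lv by simp
    qed
    ultimately show ?thesis by simp
  qed
qed

lemma I_follows_T_shift:
  assumes C: "I_follows_T (Suc k) \<beta> s \<eta>"
  shows "I_follows_T k (shift_cons \<beta> (\<eta> (Suc k))) (\<eta> (Suc k)) \<eta>"
proof -
  define e where "e = \<eta> (Suc k)"
  note CD = I_follows_TD[OF C]
  have later: "e \<le> \<eta> i" if "1 \<le> i" "i \<le> Suc k" for i
    using eta_chain[OF CD(7) that] unfolding e_def by simp
  have e: "0 \<le> e" "e \<le> 1" using CD(2,5,6) later[of 1] unfolding e_def by auto
  note sh = shift_cons_resource_path[OF CD(1) e]
  have c: "0 \<le> \<beta> 0" using resource_path_levels[OF CD(1), of 0 0] by simp
  have "\<beta> e = holdT T (Suc k) (\<beta> 0) e"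
    using CD(8)[of "Suc k" e] CD(2,3,5) unfolding e_def by simp
  then have "e \<le> T (Suc k) (\<beta> e)" using holdT_below_curve[OF T _ c e(2)] by simp
  then have curve: "1 \<le> k \<Longrightarrow> e \<le> T k (\<beta> e)"
    using classT_index_anti[OF T _ _ resource_pathD(3)[OF CD(1) e], of k "Suc k"] by simp
  have phases: "shift_cons \<beta> e t = holdT T j (shift_cons \<beta> e (if j = k then e else \<eta> (Suc j))) t"
    if j: "1 \<le> j" "j \<le> k" and t: "(if j = k then e else \<eta> (Suc j)) \<le> t" "t \<le> \<eta> j" for j t
  proof -
    have start: "(if j = k then e else \<eta> (Suc j)) = \<eta> (Suc j)" unfolding e_def by simp
    have "e \<le> \<eta> (Suc j)" using later[of "Suc j"] j by simp
    then show ?thesis using CD(8)[of j t] j t sh(4) unfolding start by simp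
  qed
  show ?thesis unfolding I_follows_T_def e_def[symmetric]
  proof (intro conjI allI impI)
    show "resource_path a (shift_cons \<beta> e)"
      using sh(1) resource_path_levels[OF CD(1), of 0 e] e unfolding resource_path_def by auto
  qed (use sh(2,4) e CD(6,7) later curve phases in auto)
qed

lemma payoff_lower:
  "k \<le> m \<Longrightarrow> I_follows_T k \<beta> s \<eta> \<Longrightarrow> V k (\<beta> 0) \<le> Kpay P1 P2 A1 A2 \<beta> \<eta> k"
proof (induction k arbitrary: \<beta> s)
  case 0
  then show ?case by (simp add: V_0)
next
  case (Suc k)
  define e where "e = \<eta> (Suc k)"
  note CD = I_follows_TD[OF Suc.prems(2)]
  have e: "s \<le> e" "e \<le> 1"
    using CD(5,6) eta_chain[OF CD(7), of 1 "Suc k"] unfolding e_def by auto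
  have IH: "V k (\<beta> e) \<le> Kpay P1 P2 A1 A2 (shift_cons \<beta> e) \<eta> k"
    using Suc.IH[OF _ I_follows_T_shift[OF Suc.prems(2)]] Suc.prems(1)
      shift_cons_resource_path(2)[OF CD(1), of e] CD(2) e unfolding e_def by simp
  have "(1 - phiI P1 \<beta> 0 e) * (P2 e + (1 - P2 e) * W k (\<beta> e)) \<le> E (Suc k) (\<beta> 0)"
    using CD(8)[of "Suc k"] CD(3)
    by (intro failure_against_holdT[OF Suc.prems(1) CD(1) CD(2) e refl CD(4)]) (auto simp: e_def)
  then show ?case unfolding Kpay_Suc Let_def e_def[symmetric]
    using failure_range effectiveness_range[OF P2, of e] CD(2) e
    by (intro payoff_step_lower[OF _ _ _ _ IH]) auto
qed

end

section \<open>Player I's realized T-strategy path\<close>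

lemma continuous_antimono_glue:
  fixes f :: "real \<Rightarrow> real"
  assumes uvw: "u \<le> v" "v \<le> w"
    and left: "continuous_on {u..v} f" "antimono_on {u..v} f"
    and right: "continuous_on {v..w} f" "antimono_on {v..w} f"
  shows "continuous_on {u..w} f \<and> antimono_on {u..w} f"
proof
  have "{u..w} = {u..v} \<union> {v..w}" using uvw by auto
  then show "continuous_on {u..w} f" using continuous_on_closed_Un[OF _ _ left(1) right(1)] by simp
  show "antimono_on {u..w} f" unfolding monotone_on_def
  proof (intro ballI impI)
    fix x y assume xy: "x \<in> {u..w}" "y \<in> {u..w}" "x \<le> y"
    consider "y \<le> v" | "v \<le> x" | "x \<le> v" "v \<le> y" by linarith
    then show "f y \<le> f x"
    proof cases
      case 3
      have "f v \<le> f x" "f y \<le> f v" using left(2) right(2) xy 3 uvw unfolding monotone_on_def by auto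
      then show ?thesis by simp
    qed (use left(2) right(2) xy in \<open>auto simp: monotone_on_def\<close>)
  qed
qed

lemma continuous_antimono_cong:
  assumes "\<forall>t\<in>{u..v}. f t = g t" "continuous_on {u..v} g \<and> antimono_on {u..v} g"
  shows "continuous_on {u..v} f \<and> antimono_on {u..v} (f :: real \<Rightarrow> real)"
  using assms continuous_on_cong[of "{u..v}" "{u..v}" f g] unfolding monotone_on_def by auto

context game begin

lemma holdT_continuous_antimono:
  assumes j: "1 \<le> j" and c: "0 \<le> c" and uv: "0 \<le> u" "v \<le> 1"
  shows "continuous_on {u..v} (holdT T j c) \<and> antimono_on {u..v} (holdT T j c)"
proof
  show "continuous_on {u..v} (holdT T j c)"
    using holdT_continuous[OF T j c] by (rule continuous_on_subset) (use uv in auto)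
  show "antimono_on {u..v} (holdT T j c)"
    unfolding monotone_on_def using holdT_anti[OF T j c] uv by auto
qed

text \<open>Fix Player II's action moments.  \<open>R j\<close> is Player I's resource when Player II has
  \<open>j\<close> units left, \<open>N t\<close> the set of units not yet used before time \<open>t\<close>, and the phase with \<open>j\<close>
  units left is [\<open>phase_start j\<close>, \<open>\<eta> j\<close>].\<close>
context
  fixes \<eta> :: "nat \<Rightarrow> real"
  assumes am: "action_moments m \<eta>"
begin

abbreviation "R j \<equiv> cT T \<eta> m a (m - j)"
abbreviation "\<alpha> \<equiv> alphaT T \<eta> m a"

definition N :: "real \<Rightarrow> nat set" where "N t = {i \<in> {1..m}. t \<le> \<eta> i}"
definition phase_start :: "nat \<Rightarrow> real" where "phase_start j = (if j = m then 0 else \<eta> (Suc j))"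

lemma eta_ordered: "\<forall>j. 1 \<le> j \<and> j < m \<longrightarrow> \<eta> (Suc j) \<le> \<eta> j"
  using am unfolding action_moments_def by auto

lemma eta_range: assumes "1 \<le> i" "i \<le> m" shows "0 \<le> \<eta> i \<and> \<eta> i \<le> 1"
proof -
  have "\<eta> m \<le> \<eta> i" "\<eta> i \<le> \<eta> 1" using eta_chain[OF eta_ordered] assms by auto
  moreover have "0 \<le> \<eta> m" "\<eta> 1 \<le> 1" using am assms unfolding action_moments_def by auto
  ultimately show ?thesis by simp
qed

lemma phase_start_range: "1 \<le> j \<Longrightarrow> j \<le> m \<Longrightarrow> 0 \<le> phase_start j \<and> phase_start j \<le> \<eta> j"
  using eta_chain[OF eta_ordered, of j "Suc j"] eta_range[of j] eta_range[of "Suc j"]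
  unfolding phase_start_def by auto

lemma R_step: assumes "i < m" shows "R i = holdT T (Suc i) (R (Suc i)) (\<eta> (Suc i))"
proof -
  have "m - i = Suc (m - Suc i)" "m - (m - Suc i) = Suc i" using assms by simp_all
  then show ?thesis by simp
qed

lemma R_range: "i \<le> m \<Longrightarrow> 0 \<le> R i \<and> R i \<le> a"
proof (induction i rule: inc_induct)
  case base then show ?case using a by simp
next
  case (step i)
  have "0 \<le> holdT T (Suc i) (R (Suc i)) (\<eta> (Suc i)) \<and> holdT T (Suc i) (R (Suc i)) (\<eta> (Suc i)) \<le> R (Suc i)"
    by (rule holdT_bounds[OF T]) (use step eta_range[of "Suc i"] in auto)
  then show ?case using R_step[OF step(2)] step(3) by simp
qed

lemma R_below_curve: assumes "1 \<le> i" "i < m" shows "\<eta> (Suc i) \<le> T i (R i)"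
proof -
  have "\<eta> (Suc i) \<le> T (Suc i) (R i)"
    unfolding R_step[OF assms(2)]
    by (rule holdT_below_curve[OF T]) (use R_range[of "Suc i"] eta_range[of "Suc i"] assms in auto)
  also have "\<dots> \<le> T i (R i)" by (rule classT_index_anti[OF T assms(1)]) (use R_range[of i] assms in auto)
  finally show ?thesis .
qed

lemma alphaT_eq: "\<alpha> t = (if card (N t) = 0 then R 0 else holdT T (card (N t)) (R (card (N t))) t)"
  by (simp only: alphaT_def N_def Let_def diff_zero)

lemma N_eq: "N t = {1..card (N t)}"
proof (cases "N t = {}")
  case False
  have fin: "finite (N t)" unfolding N_def by simp
  define M where "M = Max (N t)"
  have MN: "M \<in> N t" unfolding M_def using Max_in[OF fin False] .
  have "N t = {1..M}"
  proof
    show "N t \<subseteq> {1..M}" unfolding M_def using fin by (auto simp: N_def)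
    show "{1..M} \<subseteq> N t"
      using eta_chain[OF eta_ordered, of _ M] MN unfolding N_def by fastforce
  qed
  then show ?thesis by simp
qed simp

lemma N_card_le: "card (N t) \<le> m"
proof -
  have "N t \<subseteq> {1..m}" unfolding N_def by auto
  then show ?thesis using card_mono[of "{1..m}" "N t"] by simp
qed

lemma N_mem: "i \<in> N t \<longleftrightarrow> 1 \<le> i \<and> i \<le> card (N t)"
  using N_eq[of t] by (metis atLeastAtMost_iff)

text \<open>Units \<open>j+1..n\<close> used simultaneously at time \<open>t\<close> (while Player I holds below the curve
  \<open>T n\<close>) do not change Player I's resource.\<close>
lemma R_simultaneous:
  assumes jn: "1 \<le> j" "j < n" "n \<le> m" and tie: "\<And>i. j < i \<Longrightarrow> i \<le> n \<Longrightarrow> \<eta> i = t"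
    and curve: "t \<le> T n (R (n - 1))"
  shows "R j = R (n - 1)"
proof -
  have "j \<le> n - 1" using jn by simp
  then show ?thesis
  proof (induction j rule: inc_induct)
  case (step i)
  have "R i = holdT T (Suc i) (R (Suc i)) t" using R_step[of i] tie[of "Suc i"] step jn by simp
  also have "\<dots> = R (Suc i)"
  proof (rule holdT_before_curve[OF T])
    show "0 \<le> R (Suc i)" using R_range[of "Suc i"] step jn by simp
    have "T n (R (Suc i)) \<le> T (Suc i) (R (Suc i))"
      by (rule classT_index_anti[OF T]) (use step jn R_range[of "Suc i"] in auto)
    then show "t \<le> T (Suc i) (R (Suc i))" using curve step by simp
  qed simp
  finally show ?case using step by simp
  qed simp
qed

lemma alphaT_phase:
  assumes j: "1 \<le> j" "j \<le> m" and t: "phase_start j \<le> t" "t \<le> \<eta> j"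
  shows "\<alpha> t = holdT T j (R j) t"
proof -
  define n where "n = card (N t)"
  have jn: "j \<le> n" using N_mem[of j t] j t unfolding N_def n_def by auto
  have nm: "n \<le> m" using N_card_le unfolding n_def .
  have t1: "t \<le> 1" using t eta_range[OF j] by simp
  have a1: "\<alpha> t = holdT T n (R n) t" using alphaT_eq[of t] jn j unfolding n_def by simp
  show ?thesis
  proof (cases "n = j")
    case False
    then have jn': "j < n" using jn by simp
    have tie: "\<eta> i = t" if "j < i" "i \<le> n" for i
    proof -
      have "t \<le> \<eta> i" using N_mem[of i t] that jn' j unfolding n_def N_def by auto
      moreover have "\<eta> i \<le> \<eta> (Suc j)" using eta_chain[OF eta_ordered, of "Suc j" i] that nm by auto
      moreover have "\<eta> (Suc j) \<le> t" using t jn' nm unfolding phase_start_def by auto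
      ultimately show ?thesis by simp
    qed
    have Rn1: "R (n - 1) = holdT T n (R n) t" using R_step[of "n - 1"] jn' nm tie[of n] j by simp
    have curve: "t \<le> T n (R (n - 1))" unfolding Rn1
      by (rule holdT_below_curve[OF T]) (use R_range[of n] nm j jn' t1 in auto)
    have Rj: "R j = R (n - 1)" using R_simultaneous[OF j(1) jn' nm tie curve] by simp
    have "holdT T j (R j) t = R j"
    proof (rule holdT_before_curve[OF T j(1)])
      show "0 \<le> R j" using R_range[of j] j by simp
      have "T n (R j) \<le> T j (R j)" by (rule classT_index_anti[OF T j(1)]) (use jn R_range[of j] j in auto)
      then show "t \<le> T j (R j)" using curve Rj by simp
    qed
    then show ?thesis using a1 Rn1 Rj by simp
  qed (use a1 in simp)
qed

lemma alphaT_phase_start: assumes j: "1 \<le> j" "j \<le> m" shows "\<alpha> (phase_start j) = R j"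
proof -
  have p: "phase_start j \<le> \<eta> j" using phase_start_range[OF j] by simp
  have "\<alpha> (phase_start j) = holdT T j (R j) (phase_start j)" using alphaT_phase[OF j order_refl p] .
  also have "\<dots> = R j"
  proof (rule holdT_before_curve[OF T j(1)])
    show "0 \<le> R j" using R_range[of j] j by simp
    show "phase_start j \<le> T j (R j)"
      using classT_range[OF T j(1), of "R j"] R_range[of j] R_below_curve[OF j(1)] j
      unfolding phase_start_def by (cases "j = m") auto
  qed
  finally show ?thesis .
qed

lemma alphaT_tail: assumes "1 \<le> m" "\<eta> 1 \<le> t" shows "\<alpha> t = R 0"
proof (cases "\<eta> 1 < t")
  case True
  have "N t = {}" using eta_chain[OF eta_ordered, of 1] True unfolding N_def by force
  then show ?thesis using alphaT_eq[of t] by simp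
next
  case False
  then have "t = \<eta> 1" using assms by simp
  then have "\<alpha> t = holdT T 1 (R 1) (\<eta> 1)" using alphaT_phase[of 1] phase_start_range[of 1] assms by simp
  also have "\<dots> = R 0" using R_step[of 0] assms by simp
  finally show ?thesis .
qed

lemma alphaT_up_to_phase:
  assumes "1 \<le> m" "d < m"
  shows "continuous_on {0..\<eta> (m - d)} \<alpha> \<and> antimono_on {0..\<eta> (m - d)} \<alpha>"
  using assms(2)
proof (induction d)
  case 0
  show ?case using alphaT_phase[of m] assms a eta_range[of m] unfolding phase_start_def
    by (intro continuous_antimono_cong[OF _ holdT_continuous_antimono]) auto
next
  case (Suc d)
  define j where "j = m - Suc d"
  have j: "1 \<le> j" "j < m" "m - d = Suc j" using Suc.prems unfolding j_def by auto
  have "continuous_on {\<eta> (Suc j)..\<eta> j} \<alpha> \<and> antimono_on {\<eta> (Suc j)..\<eta> j} \<alpha>"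
    using alphaT_phase[of j] j R_range[of j] eta_range[of j] eta_range[of "Suc j"]
    unfolding phase_start_def
    by (intro continuous_antimono_cong[OF _ holdT_continuous_antimono]) auto
  then show ?case
    using continuous_antimono_glue[of 0 "\<eta> (Suc j)" "\<eta> j" \<alpha>] Suc j eta_range[of "Suc j"] eta_ordered
    unfolding j_def by auto
qed

lemma alphaT_resource_path: "resource_path a \<alpha>" "\<alpha> 0 = a"
proof -
  have ca: "continuous_on {0..1} \<alpha> \<and> antimono_on {0..1} \<alpha>"
  proof (cases "m = 0")
    case True
    then have "\<alpha> = (\<lambda>t. a)" unfolding alphaT_def by (auto simp: fun_eq_iff)
    then show ?thesis by (simp add: continuous_on_const monotone_on_def)
  next
    case False
    then have m1: "1 \<le> m" by simp
    have "\<forall>t\<in>{\<eta> 1..1}. \<alpha> t = R 0" using alphaT_tail[OF m1] by auto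
    moreover have "continuous_on {\<eta> 1..1} (\<lambda>_. R 0) \<and> antimono_on {\<eta> 1..1} (\<lambda>_::real. R 0)"
      by (simp add: continuous_on_const monotone_on_def)
    ultimately have "continuous_on {\<eta> 1..1} \<alpha> \<and> antimono_on {\<eta> 1..1} \<alpha>"
      by (rule continuous_antimono_cong)
    then show ?thesis
      using continuous_antimono_glue[of 0 "\<eta> 1" 1 \<alpha>] alphaT_up_to_phase[OF m1, of "m - 1"] eta_range[of 1] m1
      by auto
  qed
  show a0: "\<alpha> 0 = a"
  proof (cases "m = 0")
    case False
    then show ?thesis
      using alphaT_phase[of m 0] eta_range[of m] holdT_before_curve[OF T _ less_imp_le[OF a], of m 0]
        classT_range[OF T _ less_imp_le[OF a], of m] unfolding phase_start_def by simp
  qed (simp add: alphaT_def)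
  have "0 \<le> \<alpha> 1"
  proof (cases "m = 0")
    case False
    then show ?thesis using alphaT_tail[of 1] eta_range[of 1] R_range[of 0] by simp
  qed (use a in \<open>simp add: alphaT_def\<close>)
  moreover have anti: "\<forall>s t. 0 \<le> s \<and> s \<le> t \<and> t \<le> 1 \<longrightarrow> \<alpha> t \<le> \<alpha> s"
    using ca unfolding monotone_on_def by auto
  ultimately have "\<forall>t\<in>{0..1}. 0 \<le> \<alpha> t" using order_trans[of 0 "\<alpha> 1"] by fastforce
  then show "resource_path a \<alpha>" using ca anti a0 unfolding resource_path_def by simp
qed

lemma alphaT_follows_T: "I_follows_T m \<alpha> 0 \<eta>"
  unfolding I_follows_T_def
proof (intro conjI allI impI)
  show "resource_path a \<alpha>" using alphaT_resource_path(1) .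
  show "1 \<le> m \<Longrightarrow> 0 \<le> T m (\<alpha> 0)" using classT_range[OF T _ less_imp_le[OF a], of m] alphaT_resource_path(2) by auto
  show "1 \<le> m \<Longrightarrow> 0 \<le> \<eta> m" "1 \<le> m \<Longrightarrow> \<eta> 1 \<le> 1" using eta_range[of m] eta_range[of 1] by auto
  show "\<And>j. 1 \<le> j \<and> j < m \<Longrightarrow> \<eta> (Suc j) \<le> \<eta> j" using eta_ordered by auto
  fix j t assume "1 \<le> j \<and> j \<le> m \<and> (if j = m then 0 else \<eta> (Suc j)) \<le> t \<and> t \<le> \<eta> j"
  then show "\<alpha> t = holdT T j (\<alpha> (if j = m then 0 else \<eta> (Suc j))) t"
    using alphaT_phase[of j t] alphaT_phase_start[of j] unfolding phase_start_def by auto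
qed simp_all

end

lemma etaT_follows_T: assumes "consumption_fun a \<gamma>" shows "II_follows_T m \<gamma> 0 (etaT T \<gamma> m)"
  unfolding II_follows_T_def
proof (intro conjI allI impI)
  show "resource_path a \<gamma>" using consumption_fun_resource_path[OF assms] .
  show "1 \<le> m \<Longrightarrow> 0 \<le> T m (\<gamma> 0)"
    using classT_range[OF T _ less_imp_le[OF a], of m] assms unfolding consumption_fun_def by auto
  show "1 \<le> m \<Longrightarrow> etaT T \<gamma> m m = actT T \<gamma> m 0" unfolding etaT_def by simp
  fix j assume j: "1 \<le> j \<and> j < m"
  have "Suc m - j = Suc (m - j)" "m - (m - j) = j" "Suc m - Suc j = m - j" using j by auto
  then show "etaT T \<gamma> m j = actT T \<gamma> j (etaT T \<gamma> m (Suc j))" unfolding etaT_def by simp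
qed simp_all

lemma V_value: "V m a = (A1 + A2) * (\<Prod>i=1..m. (1 - P2 (T i a))) - A2"
proof (cases "m = 0")
  case True then show ?thesis using a by (simp add: V_0)
next
  case False
  then have E: "E m a = 1 - (\<Prod>i=1..m. (1 - P2 (T i a)))" using balance[OF a, of m] unfolding Pr_def by simp
  show ?thesis unfolding V_def W_def E using False by (simp add: algebra_simps)
qed

end

theorem theorem2:
  fixes P1 P2 :: "real \<Rightarrow> real" and A1 A2 a :: real and m :: nat
    and T :: "nat \<Rightarrow> real \<Rightarrow> real"
  assumes "effectiveness P1" and "effectiveness P2"
    and "0 < A1" and "0 < A2" and "0 < a"
    and "classT T"
    and hyp: "\<forall>x\<in>{0<..a}. \<forall>k\<in>{1..m}.
           exp (integral {0..x} (\<lambda>y. ln (1 - P1 (T k y))))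
           + (\<Prod>i=1..k. (1 - P2 (T i x))) = 1"
  shows "(\<forall>\<alpha>. consumption_fun a \<alpha> \<longrightarrow>
            Kpay P1 P2 A1 A2 \<alpha> (etaT T \<alpha> m) m
              \<le> (A1 + A2) * (\<Prod>i=1..m. (1 - P2 (T i a))) - A2)
       \<and> (\<forall>\<eta>. action_moments m \<eta> \<longrightarrow>
            (A1 + A2) * (\<Prod>i=1..m. (1 - P2 (T i a))) - A2
              \<le> Kpay P1 P2 A1 A2 (alphaT T \<eta> m a) \<eta> m)
       \<and> (0 < m \<longrightarrow>
            A1 - (A1 + A2) * exp (integral {0..a} (\<lambda>y. ln (1 - P1 (T m y))))
              = (A1 + A2) * (\<Prod>i=1..m. (1 - P2 (T i a))) - A2)"
proof -
  interpret game P1 P2 A1 A2 a m T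
    by unfold_locales (use assms in auto)
  have upper: "Kpay P1 P2 A1 A2 \<gamma> (etaT T \<gamma> m) m \<le> V m a" if "consumption_fun a \<gamma>" for \<gamma>
    using payoff_upper[OF order_refl etaT_follows_T[OF that]] that
    unfolding consumption_fun_def by simp
  have lower: "V m a \<le> Kpay P1 P2 A1 A2 (alphaT T \<eta> m a) \<eta> m" if "action_moments m \<eta>" for \<eta>
    using payoff_lower[OF order_refl alphaT_follows_T[OF that]] alphaT_resource_path(2)[OF that]
    by simp
  have "0 < m \<Longrightarrow> A1 - (A1 + A2) * exp (integral {0..a} (\<lambda>y. ln (1 - P1 (T m y)))) = V m a"
    unfolding V_def W_def E_def I_def by simp
  then show ?thesis using upper lower V_value by simp
qed

end
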